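(* Let $s=[d_1,\dots,d_k]$ be a finite nonempty string of positive integers, let $\epsilon>0$ and $N\ge1$. Let $E_{\epsilon,s,N}$ be the set of $x\in[0,1)$ (having at least $N+k-1$ continued fraction digits) such that \[ |A_s(N;x)-\mu(C_s)N|>\epsilon\,\mu(C_s)N. \] Then \[ \mu(E_{\epsilon,s,N})=O\!\left(\frac{1}{\epsilon^2\mu(C_s)N}\right), \] where the implied constant is uniform in $\epsilon$, $s$ and $N$ but may depend on $k$. Moreover, $E_{\epsilon,s,N}$ is a union of cylinder sets of rank $N+k-1$.
   Context: Continued fraction expansions $\langle a_1,a_2,\dots\rangle$ of numbers in $[0,1)$ have positive integer digits (for rationals, the longer finite expansion is used). $A_s(N;x)$ is the number of indices $1\le i\le N$ such that $[a_i(x),\dots,a_{i+k-1}(x)]=s$; it is only considered meaningful when $x$ has at least $N+k-1$ digits. The Gauss measure is $\mu(A)=\frac{1}{\log2}\int_A\frac{dx}{1+x}$. For a string $t=[t_1,\dots,t_j]$, the cylinder set $C_t=\{x\in[0,1):a_i(x)=t_i,\ 1\le i\le j\}$ is called a cylinder of rank $j$. *)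

theory Defs
  imports "HOL-Analysis.Analysis"
begin

text \<open>Gauss map and the digit it produces (with 1/0 = 0, so gauss 0 = 0).\<close>
definition gauss :: "real \<Rightarrow> real" where
  "gauss x = frac (1 / x)"

text \<open>Number of steps until the Gauss map reaches 0 (None for irrationals):
  this is the length of the shorter (Gauss) expansion of a rational.\<close>
definition gauss_len :: "real \<Rightarrow> nat option" where
  "gauss_len x = (if \<exists>n. (gauss ^^ n) x = 0 then Some (LEAST n. (gauss ^^ n) x = 0) else None)"

definition gauss_digit :: "real \<Rightarrow> nat \<Rightarrow> nat" where
  "gauss_digit x i = nat \<lfloor>1 / (gauss ^^ (i - 1)) x\<rfloor>"

text \<open>i-th continued fraction digit a_i(x), i \<ge> 1, using the LONGER finite expansion
  for rationals: <a_1,...,a_n> (a_n \<ge> 2) is replaced by <a_1,...,a_n - 1, 1>.\<close>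
definition cf_digit :: "real \<Rightarrow> nat \<Rightarrow> nat" where
  "cf_digit x i = (case gauss_len x of
      None \<Rightarrow> gauss_digit x i
    | Some n \<Rightarrow> (if i < n then gauss_digit x i
                 else if i = n then gauss_digit x n - 1
                 else if i = n + 1 then 1 else 0))"

definition cf_has_digits :: "real \<Rightarrow> nat \<Rightarrow> bool" where
  "cf_has_digits x m = (case gauss_len x of
      None \<Rightarrow> True
    | Some n \<Rightarrow> m \<le> (if n = 0 then 0 else n + 1))"

definition A_count :: "nat list \<Rightarrow> nat \<Rightarrow> real \<Rightarrow> nat" where
  "A_count s N x = card {i \<in> {1..N}. \<forall>j < length s. cf_digit x (i + j) = s ! j}"

definition gauss_measure :: "real measure" where
  "gauss_measure = density lborel (\<lambda>x. ennreal (indicator {0..<1} x / (ln 2 * (1 + x))))"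

abbreviation gmu :: "real set \<Rightarrow> real" where
  "gmu A \<equiv> measure gauss_measure A"

definition cylinder :: "nat list \<Rightarrow> real set" where
  "cylinder t = {x \<in> {0..<1}. cf_has_digits x (length t) \<and>
                   (\<forall>i < length t. cf_digit x (i + 1) = t ! i)}"

definition E_set :: "real \<Rightarrow> nat list \<Rightarrow> nat \<Rightarrow> real set" where
  "E_set \<epsilon> s N = {x \<in> {0..<1}. cf_has_digits x (N + length s - 1) \<and>
      \<bar>real (A_count s N x) - gmu (cylinder s) * N\<bar> > \<epsilon> * gmu (cylinder s) * N}"

end

theory Submission
  imports Defs "HOL-Probability.Probability_Measure"
begin

text \<open>For irrational \<open>x\<close>, \<open>A\<^sub>s(N;x)\<close> counts the \<open>n < N\<close> with \<open>T\<^sup>n x\<close> in the digit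
  cylinder \<open>C\<^sub>s\<close>, where \<open>T\<close> is the Gauss map, so by Chebyshev's inequality it suffices to
  bound the variance of this visit count by \<open>O(\<mu>(C\<^sub>s) N)\<close>, that is, to show that the
  correlations \<open>\<mu>(C\<^sub>s \<inter> T\<^sup>-\<^sup>d C\<^sub>s) - \<mu>(C\<^sub>s)\<^sup>2\<close> are \<open>O(\<mu>(C\<^sub>s) \<theta>\<^sup>d)\<close> for some
  \<open>\<theta> < 1\<close>. The image under \<open>T\<^sup>k\<close> of \<open>\<mu>\<close> restricted to \<open>C\<^sub>s\<close> has an explicit density,
  a ratio of linear forms in the convergents of \<open>s\<close>, which is bounded by \<open>8 \<mu>(C\<^sub>s)\<close> and
  \<open>8 \<mu>(C\<^sub>s)\<close>-Lipschitz on \<open>[0,1]\<close>. The transfer operator of \<open>T\<close> preserves integrals and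
  multiplies Lipschitz constants by at most \<open>\<theta> = 699/720\<close>, so after \<open>j\<close> further steps the
  density is within \<open>8 \<theta>\<^sup>j \<mu>(C\<^sub>s)\<close> of its mean \<open>\<mu>(C\<^sub>s)\<close>. Rationals are a null set.
  Finally, \<open>E\<close> depends only on the first \<open>N + k - 1\<close> digits, so it is a union of
  cylinders of that rank.\<close>

section \<open>The Gauss measure\<close>

definition gauss_density :: "real \<Rightarrow> real" where
  "gauss_density x = indicator {0..<1} x / (ln 2 * (1 + x))"

lemma gauss_density_nonneg: "0 \<le> gauss_density x"
  by (auto simp: gauss_density_def indicator_def)

lemma borel_measurable_gauss_density[measurable]: "gauss_density \<in> borel_measurable borel"
  unfolding gauss_density_def by measurable

lemma gauss_measure_eq_density: "gauss_measure = density lborel (\<lambda>x. ennreal (gauss_density x))"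
  unfolding gauss_measure_def gauss_density_def ..

lemma sets_gauss_measure[simp, measurable_cong]: "sets gauss_measure = sets borel"
  by (simp add: gauss_measure_def)

lemma space_gauss_measure[simp]: "space gauss_measure = UNIV"
  by (simp add: gauss_measure_def)

lemma nn_integral_gauss_measure:
  assumes [measurable]: "f \<in> borel_measurable borel"
  shows "(\<integral>\<^sup>+x. f x \<partial>gauss_measure) = (\<integral>\<^sup>+x. ennreal (gauss_density x) * f x \<partial>lborel)"
  unfolding gauss_measure_eq_density by (subst nn_integral_density) auto

lemma borel_measurable_gauss[measurable]: "gauss \<in> borel_measurable borel"
  unfolding gauss_def frac_def by measurable

lemma AE_gauss_measure_in_unit: "AE x in gauss_measure. 0 < x \<and> x < 1"
proof -
  have "AE x in lborel. x \<noteq> 0" by (rule AE_lborel_singleton)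
  then have "AE x in lborel. 0 < ennreal (gauss_density x) \<longrightarrow> 0 < x \<and> x < 1"
    by eventually_elim (auto simp: gauss_density_def indicator_def)
  then show ?thesis unfolding gauss_measure_eq_density
    by (subst AE_density) auto
qed

lemma emeasure_gauss_measure_UNIV: "emeasure gauss_measure UNIV = 1"
proof -
  have "emeasure gauss_measure UNIV = (\<integral>\<^sup>+x. ennreal (gauss_density x) \<partial>lborel)"
    unfolding gauss_measure_eq_density by (subst emeasure_density) auto
  also have "\<dots> = (\<integral>\<^sup>+x. ennreal (1 / (ln 2 * (1 + x))) * indicator {0..1} x \<partial>lborel)"
  proof (rule nn_integral_cong_AE)
    have "AE x in lborel. x \<noteq> 1" by (rule AE_lborel_singleton)
    then show "AE x in lborel. ennreal (gauss_density x) = ennreal (1 / (ln 2 * (1 + x))) * indicator {0..1} x"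
      by eventually_elim (auto simp: gauss_density_def indicator_def)
  qed
  also have "\<dots> = ennreal (ln (1 + 1) / ln 2 - ln (1 + 0) / ln 2)"
  proof (rule nn_integral_FTC_Icc[where F="\<lambda>x. ln (1 + x) / ln 2"])
    fix x :: real assume "x \<in> {0..1}"
    then have "((\<lambda>x. ln (1 + x) / ln 2) has_real_derivative (1 / (1 + x)) / ln 2) (at x)"
      by (auto intro!: derivative_eq_intros)
    then show "((\<lambda>x. ln (1 + x) / ln 2) has_real_derivative 1 / (ln 2 * (1 + x))) (at x)"
      by (simp add: field_simps)
  qed auto
  finally show ?thesis by simp
qed

interpretation gauss_measure: prob_space gauss_measure
  by standard (simp add: emeasure_gauss_measure_UNIV)

section \<open>Inverse branches of the Gauss map and the transfer operator\<close>

definition gauss_branch :: "real \<Rightarrow> real \<Rightarrow> real" where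
  "gauss_branch a y = 1 / (a + y)"

text \<open>\<open>branch_weight a y\<close> is \<open>|u'(y)| \<rho>(u y) / \<rho>(y)\<close> for the branch \<open>u = gauss_branch a\<close>
  and the Gauss density \<open>\<rho>\<close>.\<close>
definition branch_weight :: "real \<Rightarrow> real \<Rightarrow> real" where
  "branch_weight a y = (1 + y) / ((a + y) * (a + y + 1))"

definition branch_interval :: "real \<Rightarrow> real set" where
  "branch_interval a = {1 / (a + 1)<..1 / a}"

lemma borel_measurable_gauss_branch[measurable]: "gauss_branch a \<in> borel_measurable borel"
  unfolding gauss_branch_def by measurable

lemma borel_measurable_branch_weight[measurable]: "branch_weight a \<in> borel_measurable borel"
  unfolding branch_weight_def by measurable

lemma branch_weight_nonneg: "0 \<le> y \<Longrightarrow> 0 < a \<Longrightarrow> 0 \<le> branch_weight a y"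
  unfolding branch_weight_def by (auto intro!: divide_nonneg_pos)

lemma gauss_density_gauss_branch:
  assumes a: "1 \<le> a" and y: "0 < y" "y < 1"
  shows "gauss_density (gauss_branch a y) * (1 / (a + y)^2) = gauss_density y * branch_weight a y"
proof -
  have pos: "0 < a + y" "0 < 1 + y" "0 < a + y + 1" using a y by auto
  have "gauss_branch a y \<in> {0..<1}" using a y by (auto simp: gauss_branch_def)
  then have density: "gauss_density (gauss_branch a y) = (a + y) / (ln 2 * (a + y + 1))"
    using pos by (simp add: gauss_density_def gauss_branch_def field_simps)
  show ?thesis
    unfolding density using y pos by (simp add: gauss_density_def branch_weight_def power2_eq_square divide_simps)
qed

lemma nn_integral_lborel_gauss_branch:
  fixes f :: "real \<Rightarrow> ennreal"
  assumes a: "1 \<le> a" and [measurable]: "f \<in> borel_measurable borel"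
  shows "(\<integral>\<^sup>+x. f x * indicator {1 / (a + 1)..1 / a} x \<partial>lborel)
       = (\<integral>\<^sup>+y. f (gauss_branch a y) * ennreal (1 / (a + y)^2) * indicator {0..1} y \<partial>lborel)"
proof -
  define \<phi> where "\<phi> t = 1 / (a - t)" for t :: real
  have "(\<integral>\<^sup>+x. f x * indicator {1 / (a + 1)..1 / a} x \<partial>lborel)
      = (\<integral>\<^sup>+x. f x * indicator {\<phi> (-1)..\<phi> 0} x \<partial>lborel)"
    by (simp add: \<phi>_def)
  also have "\<dots> = (\<integral>\<^sup>+t. f (\<phi> t) * ennreal (1 / (a - t)^2) * indicator {-1..0} t \<partial>lborel)"
  proof (rule nn_integral_substitution_aux)
    fix t :: real assume "t \<in> {-1..0}"
    then have "a - t \<noteq> 0" using a by auto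
    then show "(\<phi> has_real_derivative 1 / (a - t)^2) (at t)"
      unfolding \<phi>_def by (auto intro!: derivative_eq_intros simp: power2_eq_square field_simps)
  next
    have "\<forall>t\<in>{-1..0}. a - t \<noteq> 0" using a by auto
    then show "continuous_on {-1..0} (\<lambda>t. 1 / (a - t)^2)"
      by (auto intro!: continuous_intros)
  qed auto
  also have "\<dots> = (\<integral>\<^sup>+y. f (gauss_branch a y) * ennreal (1 / (a + y)^2) * indicator {0..1} y \<partial>lborel)"
    by (subst nn_integral_real_affine[where c="-1" and t=0])
      (auto simp: \<phi>_def gauss_branch_def indicator_def conj_commute)
  finally show ?thesis .
qed

lemma nn_integral_branch_interval:
  fixes H :: "real \<Rightarrow> ennreal"
  assumes a: "1 \<le> a" and [measurable]: "H \<in> borel_measurable borel"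
  shows "(\<integral>\<^sup>+x. indicator (branch_interval a) x * H x \<partial>gauss_measure)
       = (\<integral>\<^sup>+y. ennreal (branch_weight a y) * H (gauss_branch a y) \<partial>gauss_measure)"
proof -
  define f where "f x = ennreal (gauss_density x) * indicator (branch_interval a) x * H x" for x
  have [measurable]: "f \<in> borel_measurable borel" unfolding f_def branch_interval_def by measurable
  have "(\<integral>\<^sup>+x. indicator (branch_interval a) x * H x \<partial>gauss_measure)
      = (\<integral>\<^sup>+x. f x * indicator {1 / (a + 1)..1 / a} x \<partial>lborel)"
  proof -
    have "(\<integral>\<^sup>+x. indicator (branch_interval a) x * H x \<partial>gauss_measure) = (\<integral>\<^sup>+x. f x \<partial>lborel)"
      by (subst nn_integral_gauss_measure) (auto simp: f_def[abs_def] branch_interval_def mult.assoc)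
    also have "\<dots> = (\<integral>\<^sup>+x. f x * indicator {1 / (a + 1)..1 / a} x \<partial>lborel)"
      by (rule nn_integral_cong) (auto simp: f_def branch_interval_def indicator_def)
    finally show ?thesis .
  qed
  also have "\<dots> = (\<integral>\<^sup>+y. f (gauss_branch a y) * ennreal (1 / (a + y)^2) * indicator {0..1} y \<partial>lborel)"
    by (rule nn_integral_lborel_gauss_branch[OF a]) simp
  also have "\<dots> = (\<integral>\<^sup>+y. ennreal (gauss_density y) * (ennreal (branch_weight a y) * H (gauss_branch a y)) \<partial>lborel)"
  proof (rule nn_integral_cong_AE)
    have "AE y in lborel. y \<noteq> 0" "AE y in lborel. y \<noteq> 1" by (rule AE_lborel_singleton)+
    then show "AE y in lborel. f (gauss_branch a y) * ennreal (1 / (a + y)^2) * indicator {0..1} y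
         = ennreal (gauss_density y) * (ennreal (branch_weight a y) * H (gauss_branch a y))"
    proof eventually_elim
      fix y :: real assume y: "y \<noteq> 0" "y \<noteq> 1"
      show "f (gauss_branch a y) * ennreal (1 / (a + y)^2) * indicator {0..1} y
         = ennreal (gauss_density y) * (ennreal (branch_weight a y) * H (gauss_branch a y))"
      proof (cases "0 < y \<and> y < 1")
        case True
        have "gauss_branch a y \<in> branch_interval a"
          using True a by (auto simp: gauss_branch_def branch_interval_def field_simps)
        then have "f (gauss_branch a y) * ennreal (1 / (a + y)^2) * indicator {0..1} y
            = (ennreal (gauss_density (gauss_branch a y)) * ennreal (1 / (a + y)^2)) * H (gauss_branch a y)"
          using True by (simp add: f_def mult_ac)
        also have "ennreal (gauss_density (gauss_branch a y)) * ennreal (1 / (a + y)^2)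
            = ennreal (gauss_density y) * ennreal (branch_weight a y)"
          using gauss_density_gauss_branch[OF a, of y] True a
          by (simp add: gauss_density_nonneg branch_weight_nonneg flip: ennreal_mult)
        finally show ?thesis by (simp add: mult_ac)
      qed (use y in \<open>auto simp: gauss_density_def\<close>)
    qed
  qed
  also have "\<dots> = (\<integral>\<^sup>+y. ennreal (branch_weight a y) * H (gauss_branch a y) \<partial>gauss_measure)"
    by (subst nn_integral_gauss_measure) auto
  finally show ?thesis .
qed

lemma mem_branch_interval_iff:
  assumes "0 < x"
  shows "x \<in> branch_interval (real n + 1) \<longleftrightarrow> \<lfloor>1 / x\<rfloor> = int n + 1"
proof -
  have "x \<in> branch_interval (real n + 1) \<longleftrightarrow> 1 / (real n + 2) < x \<and> x \<le> 1 / (real n + 1)"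
    by (simp add: branch_interval_def add.assoc)
  also have "\<dots> \<longleftrightarrow> real n + 1 \<le> 1 / x \<and> 1 / x < real n + 2"
    using assms by (auto simp: field_simps)
  also have "\<dots> \<longleftrightarrow> \<lfloor>1 / x\<rfloor> = int n + 1"
    by (simp add: floor_eq_iff add.assoc)
  finally show ?thesis .
qed

lemma suminf_indicator_branch_interval:
  assumes "0 < x" "x < 1"
  shows "(\<Sum>n. indicator (branch_interval (real n + 1)) x :: ennreal) = 1"
proof -
  define n0 where "n0 = nat \<lfloor>1 / x\<rfloor> - 1"
  have "\<lfloor>1 / x\<rfloor> \<ge> 1" using assms by (simp add: le_floor_iff field_simps)
  then have "int n0 + 1 = \<lfloor>1 / x\<rfloor>" unfolding n0_def by linarith
  then have "(\<lambda>n. indicator (branch_interval (real n + 1)) x :: ennreal) = (\<lambda>n. if n = n0 then 1 else 0)"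
    using mem_branch_interval_iff[OF assms(1)] by (auto simp: indicator_def)
  then show ?thesis using sums_single[of n0 "\<lambda>_. 1 :: ennreal"] by (simp add: sums_iff)
qed

lemma nn_integral_split_branches:
  assumes [measurable]: "K \<in> borel_measurable borel"
  shows "(\<integral>\<^sup>+x. K x \<partial>gauss_measure)
       = (\<Sum>n. \<integral>\<^sup>+x. indicator (branch_interval (real n + 1)) x * K x \<partial>gauss_measure)"
proof -
  have [measurable]: "\<And>n. branch_interval (real n + 1) \<in> sets borel" by (simp add: branch_interval_def)
  have "(\<Sum>n. \<integral>\<^sup>+x. indicator (branch_interval (real n + 1)) x * K x \<partial>gauss_measure)
      = (\<integral>\<^sup>+x. (\<Sum>n. indicator (branch_interval (real n + 1)) x) * K x \<partial>gauss_measure)"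
    by (subst nn_integral_suminf[symmetric]) auto
  also have "\<dots> = (\<integral>\<^sup>+x. K x \<partial>gauss_measure)"
    by (rule nn_integral_cong_AE)
      (use AE_gauss_measure_in_unit in \<open>eventually_elim, simp add: suminf_indicator_branch_interval\<close>)
  finally show ?thesis ..
qed

lemma gauss_gauss_branch: "0 \<le> y \<Longrightarrow> y < 1 \<Longrightarrow> gauss (gauss_branch (real n + 1) y) = y"
  by (simp add: gauss_def gauss_branch_def frac_def floor_eq_iff)

definition transfer_nn :: "(real \<Rightarrow> ennreal) \<Rightarrow> real \<Rightarrow> ennreal" where
  "transfer_nn K y = (\<Sum>n. ennreal (branch_weight (real n + 1) y) * K (gauss_branch (real n + 1) y))"

definition transfer :: "(real \<Rightarrow> real) \<Rightarrow> real \<Rightarrow> real" where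
  "transfer f y = (\<Sum>n. branch_weight (real n + 1) y * f (gauss_branch (real n + 1) y))"

lemma nn_integral_comp_gauss:
  assumes [measurable]: "K \<in> borel_measurable borel" "B \<in> sets borel"
  shows "(\<integral>\<^sup>+x. K x * indicator B (gauss x) \<partial>gauss_measure)
       = (\<integral>\<^sup>+y. indicator B y * transfer_nn K y \<partial>gauss_measure)"
proof -
  let ?a = "\<lambda>n. real n + 1"
  have "(\<integral>\<^sup>+x. K x * indicator B (gauss x) \<partial>gauss_measure)
      = (\<Sum>n. \<integral>\<^sup>+x. indicator (branch_interval (?a n)) x * (K x * indicator B (gauss x)) \<partial>gauss_measure)"
    by (rule nn_integral_split_branches) measurable
  also have "\<dots> = (\<Sum>n. \<integral>\<^sup>+y. ennreal (branch_weight (?a n) y) *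
      (K (gauss_branch (?a n) y) * indicator B (gauss (gauss_branch (?a n) y))) \<partial>gauss_measure)"
    by (intro suminf_cong nn_integral_branch_interval) auto
  also have "\<dots> = (\<Sum>n. \<integral>\<^sup>+y. indicator B y *
      (ennreal (branch_weight (?a n) y) * K (gauss_branch (?a n) y)) \<partial>gauss_measure)"
    by (intro suminf_cong nn_integral_cong_AE)
      (use AE_gauss_measure_in_unit in \<open>eventually_elim, simp add: gauss_gauss_branch mult_ac\<close>)
  also have "\<dots> = (\<integral>\<^sup>+y. indicator B y * transfer_nn K y \<partial>gauss_measure)"
    by (subst nn_integral_suminf[symmetric]) (auto simp: transfer_nn_def)
  finally show ?thesis .
qed

lemma telescoping_inverse_sums:
  fixes c :: real
  assumes "0 < c"
  shows "(\<lambda>n. 1 / (real n + c) - 1 / (real n + 1 + c)) sums (1 / c)"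
proof -
  have "(\<lambda>n. inverse (c + real n)) \<longlonglongrightarrow> 0"
    by (intro tendsto_inverse_0_at_top filterlim_tendsto_add_at_top[OF tendsto_const]
        filterlim_real_sequentially)
  then have "(\<lambda>n. 1 / (real n + c)) \<longlonglongrightarrow> 0" by (simp add: inverse_eq_divide add.commute)
  from telescope_sums'[OF this] show ?thesis by (simp add: add_ac)
qed

lemma branch_weight_sums: "0 \<le> y \<Longrightarrow> (\<lambda>n. branch_weight (real n + 1) y) sums 1"
proof -
  assume y: "0 \<le> y"
  have "(\<lambda>n. (1 + y) * (1 / (real n + (1 + y)) - 1 / (real n + 1 + (1 + y)))) sums ((1 + y) * (1 / (1 + y)))"
    using y by (intro sums_mult telescoping_inverse_sums) auto
  moreover have "(1 + y) * (1 / (real n + (1 + y)) - 1 / (real n + 1 + (1 + y))) = branch_weight (real n + 1) y" for n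
    using y by (simp add: branch_weight_def field_simps)
  ultimately show ?thesis using y by simp
qed

lemma transfer_nn_one: "0 \<le> y \<Longrightarrow> transfer_nn (\<lambda>_. 1) y = 1"
  unfolding transfer_nn_def using suminf_ennreal_eq[OF branch_weight_nonneg branch_weight_sums] by simp

lemma sets_vimage_gauss[measurable]: "B \<in> sets borel \<Longrightarrow> gauss -` B \<in> sets borel"
  using measurable_sets_borel[OF borel_measurable_gauss, of B] by simp

lemma sets_vimage_gauss_funpow[measurable]: "B \<in> sets borel \<Longrightarrow> (gauss ^^ n) -` B \<in> sets borel"
  using measurable_sets_borel[OF measurable_compose_n[OF borel_measurable_gauss], of B n] by simp

lemma emeasure_vimage_gauss:
  assumes [measurable]: "B \<in> sets borel"
  shows "emeasure gauss_measure (gauss -` B) = emeasure gauss_measure B"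
proof -
  have "(\<lambda>x. 1 * indicator B (gauss x)) = (indicator (gauss -` B) :: real \<Rightarrow> ennreal)"
    by (auto simp: indicator_def)
  then have "emeasure gauss_measure (gauss -` B) = (\<integral>\<^sup>+x. 1 * indicator B (gauss x) \<partial>gauss_measure)"
    by simp
  also have "\<dots> = (\<integral>\<^sup>+y. indicator B y * transfer_nn (\<lambda>_. 1) y \<partial>gauss_measure)"
    by (rule nn_integral_comp_gauss) auto
  also have "\<dots> = emeasure gauss_measure B"
    by (subst nn_integral_indicator[symmetric], simp, rule nn_integral_cong_AE)
      (use AE_gauss_measure_in_unit in \<open>eventually_elim, simp add: transfer_nn_one\<close>)
  finally show ?thesis .
qed

lemma emeasure_vimage_gauss_funpow:
  assumes [measurable]: "B \<in> sets borel"
  shows "emeasure gauss_measure ((gauss ^^ n) -` B) = emeasure gauss_measure B"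
proof (induction n)
  case (Suc n)
  have "(gauss ^^ Suc n) -` B = gauss -` ((gauss ^^ n) -` B)"
    by (auto simp: funpow_Suc_right simp del: funpow.simps)
  then show ?case using emeasure_vimage_gauss[of "(gauss ^^ n) -` B"] Suc by (simp del: funpow.simps)
qed simp

lemma measure_vimage_gauss_funpow:
  "B \<in> sets borel \<Longrightarrow> measure gauss_measure ((gauss ^^ n) -` B) = measure gauss_measure B"
  by (simp add: measure_def emeasure_vimage_gauss_funpow)

lemma AE_gauss_funpow_in_unit: "AE x in gauss_measure. 0 < (gauss ^^ n) x \<and> (gauss ^^ n) x < 1"
proof -
  have [measurable]: "- {0<..<1::real} \<in> sets borel" by simp
  have "AE x in gauss_measure. x \<in> {0<..<1}" using AE_gauss_measure_in_unit by simp
  then have "emeasure gauss_measure (- {0<..<1}) = 0"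
    by (subst (asm) AE_iff_measurable[of "- {0<..<1}"]) auto
  then have "emeasure gauss_measure ((gauss ^^ n) -` (- {0<..<1})) = 0"
    by (simp add: emeasure_vimage_gauss_funpow)
  then have "AE x in gauss_measure. (gauss ^^ n) x \<in> {0<..<1}"
    by (subst AE_iff_measurable[of "(gauss ^^ n) -` (- {0<..<1})"]) auto
  then show ?thesis by simp
qed

section \<open>Digit cylinders and their densities\<close>

definition digit :: "real \<Rightarrow> nat" where
  "digit y = nat \<lfloor>1 / y\<rfloor>"

definition digit_cylinder :: "nat list \<Rightarrow> real set" where
  "digit_cylinder s = {x. \<forall>j<length s. digit ((gauss ^^ j) x) = s ! j}"

lemma measurable_digit[measurable]: "digit \<in> measurable borel (count_space UNIV)"
  unfolding digit_def by measurable

lemma sets_digit_cylinder[measurable]: "digit_cylinder s \<in> sets borel"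
  unfolding digit_cylinder_def by measurable

lemma digit_cylinder_snoc:
  "digit_cylinder (s @ [a]) = {x \<in> digit_cylinder s. digit ((gauss ^^ length s) x) = a}"
  by (auto simp: digit_cylinder_def nth_append less_Suc_eq)

lemma digit_eq_iff_mem_branch_interval:
  "0 < y \<Longrightarrow> digit y = Suc n \<longleftrightarrow> y \<in> branch_interval (real n + 1)"
  by (auto simp: digit_def mem_branch_interval_iff)

text \<open>For a digit string with convergents \<open>p\<^sub>j/q\<^sub>j\<close>, \<open>convergents s\<close> is
  \<open>(q\<^sub>k, q\<^sub>k\<^sub>-\<^sub>1, q\<^sub>k + p\<^sub>k, q\<^sub>k\<^sub>-\<^sub>1 + p\<^sub>k\<^sub>-\<^sub>1)\<close>, and \<open>cylinder_density s\<close> is the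
  density, with respect to the Gauss measure, of the image under \<open>gauss ^^ k\<close> of the Gauss
  measure restricted to the cylinder of \<open>s\<close>.\<close>

definition convergent_step :: "real \<times> real \<times> real \<times> real \<Rightarrow> nat \<Rightarrow> real \<times> real \<times> real \<times> real" where
  "convergent_step p a = (case p of (\<alpha>, \<beta>, \<gamma>, \<delta>) \<Rightarrow> (real a * \<alpha> + \<beta>, \<alpha>, real a * \<gamma> + \<delta>, \<gamma>))"

definition convergents :: "nat list \<Rightarrow> real \<times> real \<times> real \<times> real" where
  "convergents s = foldl convergent_step (1, 0, 1, 1) s"

definition density_of_convergents :: "real \<times> real \<times> real \<times> real \<Rightarrow> real \<Rightarrow> real" where
  "density_of_convergents p y = (case p of (\<alpha>, \<beta>, \<gamma>, \<delta>) \<Rightarrow> (1 + y) / ((\<alpha> + \<beta> * y) * (\<gamma> + \<delta> * y)))"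

definition cylinder_density :: "nat list \<Rightarrow> real \<Rightarrow> real" where
  "cylinder_density s = density_of_convergents (convergents s)"

definition admissible :: "real \<times> real \<times> real \<times> real \<Rightarrow> bool" where
  "admissible p = (case p of (\<alpha>, \<beta>, \<gamma>, \<delta>) \<Rightarrow> 1 \<le> \<alpha> \<and> 0 \<le> \<beta> \<and> \<beta> \<le> \<alpha> \<and> 1 \<le> \<gamma> \<and> 0 \<le> \<delta> \<and> \<delta> \<le> \<gamma>)"

lemma convergents_snoc: "convergents (s @ [a]) = convergent_step (convergents s) a"
  by (simp add: convergents_def)

lemma admissible_convergent_step: "admissible p \<Longrightarrow> 1 \<le> a \<Longrightarrow> admissible (convergent_step p a)"
proof -
  assume "admissible p" "1 \<le> a"
  moreover obtain \<alpha> \<beta> \<gamma> \<delta> where p: "p = (\<alpha>, \<beta>, \<gamma>, \<delta>)" by (cases p) auto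
  ultimately have h: "1 \<le> \<alpha>" "0 \<le> \<beta>" "\<beta> \<le> \<alpha>" "1 \<le> \<gamma>" "0 \<le> \<delta>" "\<delta> \<le> \<gamma>" "1 \<le> real a"
    by (auto simp: admissible_def)
  have "\<alpha> \<le> real a * \<alpha>" "\<gamma> \<le> real a * \<gamma>" using h by (simp_all add: mult_le_cancel_right1)
  then show ?thesis using h unfolding admissible_def convergent_step_def p by (simp; intro conjI; linarith)
qed

lemma admissible_convergents: "\<forall>d\<in>set s. 0 < d \<Longrightarrow> admissible (convergents s)"
proof (induction s rule: rev_induct)
  case (snoc a s)
  then show ?case by (simp add: convergents_snoc admissible_convergent_step)
qed (simp add: convergents_def admissible_def)

lemma borel_measurable_density_of_convergents[measurable]:
  "density_of_convergents p \<in> borel_measurable borel"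
  by (cases p) (simp add: density_of_convergents_def[abs_def])

lemma borel_measurable_cylinder_density[measurable]: "cylinder_density s \<in> borel_measurable borel"
  unfolding cylinder_density_def by simp

lemma density_of_convergents_nonneg: "admissible p \<Longrightarrow> 0 \<le> y \<Longrightarrow> 0 \<le> density_of_convergents p y"
  by (cases p) (auto simp: density_of_convergents_def admissible_def
      intro!: divide_nonneg_pos mult_pos_pos add_pos_nonneg)

lemma branch_weight_mult_density_of_convergents:
  assumes p: "admissible p" and a: "1 \<le> a" and y: "0 \<le> y"
  shows "branch_weight (real a) y * density_of_convergents p (gauss_branch (real a) y)
       = density_of_convergents (convergent_step p a) y"
proof -
  obtain \<alpha> \<beta> \<gamma> \<delta> where pp: "p = (\<alpha>, \<beta>, \<gamma>, \<delta>)" by (cases p) auto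
  have h: "1 \<le> \<alpha>" "0 \<le> \<beta>" "1 \<le> \<gamma>" "0 \<le> \<delta>" using p by (auto simp: admissible_def pp)
  define z where "z = real a + y"
  have z: "z \<ge> 1" using a y by (simp add: z_def)
  have "0 < \<alpha> * z + \<beta>" "0 < \<gamma> * z + \<delta>" using h z by (auto intro!: add_pos_nonneg mult_pos_pos)
  moreover have "\<alpha> + \<beta> / z = (\<alpha> * z + \<beta>) / z" "\<gamma> + \<delta> / z = (\<gamma> * z + \<delta>) / z" "1 + 1 / z = (z + 1) / z"
    using z by (auto simp: field_simps)
  ultimately have "(1 + y) / (z * (z + 1)) * ((1 + 1 / z) / ((\<alpha> + \<beta> / z) * (\<gamma> + \<delta> / z)))
      = (1 + y) / ((\<alpha> * z + \<beta>) * (\<gamma> * z + \<delta>))"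
    using z by (simp add: divide_simps)
  then show ?thesis
    by (simp add: branch_weight_def density_of_convergents_def gauss_branch_def convergent_step_def
        pp z_def algebra_simps)
qed

lemma cylinder_density_nonneg: "\<forall>d\<in>set s. 0 < d \<Longrightarrow> 0 \<le> t \<Longrightarrow> 0 \<le> cylinder_density s t"
  unfolding cylinder_density_def by (intro density_of_convergents_nonneg admissible_convergents)

lemma cylinder_density_snoc:
  assumes "\<forall>d\<in>set s. 0 < d" and "0 \<le> y"
  shows "cylinder_density (s @ [Suc b]) y
       = branch_weight (real b + 1) y * cylinder_density s (gauss_branch (real b + 1) y)"
  using branch_weight_mult_density_of_convergents[OF admissible_convergents[OF assms(1)], of "Suc b" y] assms(2)
  by (simp add: cylinder_density_def convergents_snoc add.commute)

lemma nn_integral_digit_cylinder: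
  assumes "\<forall>d\<in>set s. 0 < d" and "h \<in> borel_measurable borel"
  shows "(\<integral>\<^sup>+x. indicator (digit_cylinder s) x * h ((gauss ^^ length s) x) \<partial>gauss_measure)
       = (\<integral>\<^sup>+y. ennreal (cylinder_density s y) * h y \<partial>gauss_measure)"
  using assms
proof (induction s arbitrary: h rule: rev_induct)
  case Nil
  show ?case
    by (rule nn_integral_cong_AE) (use AE_gauss_measure_in_unit in \<open>eventually_elim,
        simp add: digit_cylinder_def cylinder_density_def convergents_def density_of_convergents_def\<close>)
next
  case (snoc a s)
  note [measurable] = snoc.prems(2)
  have pos: "\<forall>d\<in>set s. 0 < d" and "0 < a" using snoc.prems by auto
  then obtain b where a: "a = Suc b" using gr0_implies_Suc by blast
  let ?a = "real b + 1"
  define h' where "h' y = indicator (branch_interval ?a) y * h (gauss y)" for y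
  have [measurable]: "h' \<in> borel_measurable borel" unfolding h'_def branch_interval_def by measurable
  have "(\<integral>\<^sup>+x. indicator (digit_cylinder (s @ [a])) x * h ((gauss ^^ length (s @ [a])) x) \<partial>gauss_measure)
      = (\<integral>\<^sup>+x. indicator (digit_cylinder s) x * h' ((gauss ^^ length s) x) \<partial>gauss_measure)"
    by (rule nn_integral_cong_AE) (use AE_gauss_funpow_in_unit[of "length s"] in \<open>eventually_elim,
        simp add: digit_cylinder_snoc h'_def a digit_eq_iff_mem_branch_interval indicator_def funpow_swap1\<close>)
  also have "\<dots> = (\<integral>\<^sup>+y. indicator (branch_interval ?a) y * (ennreal (cylinder_density s y) * h (gauss y)) \<partial>gauss_measure)"
    by (subst snoc.IH[OF pos]) (simp_all add: h'_def mult_ac)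
  also have "\<dots> = (\<integral>\<^sup>+y. ennreal (branch_weight ?a y) *
      (ennreal (cylinder_density s (gauss_branch ?a y)) * h (gauss (gauss_branch ?a y))) \<partial>gauss_measure)"
    by (rule nn_integral_branch_interval) auto
  also have "\<dots> = (\<integral>\<^sup>+y. ennreal (cylinder_density (s @ [a]) y) * h y \<partial>gauss_measure)"
  proof (rule nn_integral_cong_AE)
    have "ennreal (branch_weight ?a y) * (ennreal (cylinder_density s (gauss_branch ?a y)) * h (gauss (gauss_branch ?a y)))
        = ennreal (cylinder_density (s @ [a]) y) * h y" if y: "0 < y \<and> y < 1" for y
    proof -
      have "0 \<le> gauss_branch ?a y" using y by (simp add: gauss_branch_def)
      then show ?thesis
        using y gauss_gauss_branch[of y b] cylinder_density_snoc[OF pos, of y b] branch_weight_nonneg[of y ?a]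
          cylinder_density_nonneg[OF pos, of "gauss_branch ?a y"]
        by (simp add: a ennreal_mult mult.assoc)
    qed
    then show "AE y in gauss_measure. ennreal (branch_weight ?a y) *
        (ennreal (cylinder_density s (gauss_branch ?a y)) * h (gauss (gauss_branch ?a y)))
        = ennreal (cylinder_density (s @ [a]) y) * h y"
      using AE_gauss_measure_in_unit by (auto elim: AE_mp)
  qed
  finally show ?case .
qed

lemma emeasure_digit_cylinder:
  "\<forall>d\<in>set s. 0 < d \<Longrightarrow>
    emeasure gauss_measure (digit_cylinder s) = (\<integral>\<^sup>+y. ennreal (cylinder_density s y) \<partial>gauss_measure)"
  using nn_integral_digit_cylinder[of s "\<lambda>_. 1"] by simp

section \<open>The transfer operator contracts Lipschitz constants\<close>

lemma gauss_branch_in_unit: "y \<in> {0..1} \<Longrightarrow> gauss_branch (real n + 1) y \<in> {0..1}"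
  by (auto simp: gauss_branch_def)

lemma branch_weight_mult_branch_diff_le:
  fixes a x y :: real
  assumes a: "1 \<le> a" and x: "x \<in> {0..1}" and y: "y \<in> {0..1}"
  shows "branch_weight a x * \<bar>gauss_branch a x - gauss_branch a y\<bar> \<le> 2 / (a^2 * (a + 1)^2) * \<bar>x - y\<bar>"
proof -
  have x0: "0 \<le> x" "x \<le> 1" and y0: "0 \<le> y" "y \<le> 1" using x y by auto
  have pos: "a + x > 0" "a + y > 0" "a + x + 1 > 0" using a x0 y0 by linarith+
  have "gauss_branch a x - gauss_branch a y = (y - x) / ((a + x) * (a + y))"
    using pos by (simp add: gauss_branch_def field_simps)
  then have "branch_weight a x * \<bar>gauss_branch a x - gauss_branch a y\<bar>
     = ((1 + x) / (a + x)) * (1 / (a + x + 1)) * (1 / (a + x)) * (1 / (a + y)) * \<bar>x - y\<bar>"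
    using pos by (simp add: branch_weight_def abs_minus_commute)
  moreover have "(1 + x) / (a + x) \<le> 2 / (a + 1)"
  proof -
    have "(a - 1) * (x - 1) \<le> 0" using a x0 by (intro mult_nonneg_nonpos) auto
    then show ?thesis using pos a by (simp add: divide_simps algebra_simps)
  qed
  moreover have "1 / (a + x + 1) \<le> 1 / (a + 1)" "1 / (a + x) \<le> 1 / a" "1 / (a + y) \<le> 1 / a"
    using a x0 y0 by (auto intro!: divide_left_mono)
  ultimately have "branch_weight a x * \<bar>gauss_branch a x - gauss_branch a y\<bar>
      \<le> (2 / (a + 1)) * (1 / (a + 1)) * (1 / a) * (1 / a) * \<bar>x - y\<bar>"
    using pos a by (simp only:) (intro mult_right_mono mult_mono; simp)
  also have "\<dots> = 2 / (a^2 * (a + 1)^2) * \<bar>x - y\<bar>" using a by (simp add: power2_eq_square field_simps)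
  finally show ?thesis .
qed

lemma has_field_derivative_branch_weight:
  assumes "1 \<le> a" "0 \<le> t"
  shows "(branch_weight a has_field_derivative
           (a^2 - a - 1 - t^2 - 2 * t) / ((a + t)^2 * (a + t + 1)^2)) (at t)"
proof -
  have "(a + t) * (a + t + 1) \<noteq> 0" using assms by (simp add: add_pos_nonneg)
  then show ?thesis unfolding branch_weight_def[abs_def]
    by (auto intro!: derivative_eq_intros simp: power2_eq_square algebra_simps)
qed

lemma abs_deriv_branch_weight_le:
  fixes a t :: real
  assumes a: "1 \<le> a" and t: "t \<in> {0..1}"
  shows "\<bar>(a^2 - a - 1 - t^2 - 2 * t) / ((a + t)^2 * (a + t + 1)^2)\<bar> \<le> 1 / (a + 1)^2"
proof -
  have t0: "0 \<le> t" "t \<le> 1" using t by auto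
  have pos: "a + t > 0" "a + t + 1 > 0" using a t0 by linarith+
  have "a \<le> a * a" "t \<le> a * t" "0 \<le> t * t"
    using mult_left_mono[OF a, of a] mult_right_mono[OF a t0(1)] a by auto
  then have "\<bar>a^2 - a - 1 - t^2 - 2 * t\<bar> \<le> (a + t)^2"
    using a t0 unfolding abs_le_iff power2_eq_square by (simp only: algebra_simps) (intro conjI; linarith)
  then have "\<bar>a^2 - a - 1 - t^2 - 2 * t\<bar> / ((a + t)^2 * (a + t + 1)^2)
      \<le> (a + t)^2 / ((a + t)^2 * (a + t + 1)^2)"
    using pos by (intro divide_right_mono) auto
  then have "\<bar>(a^2 - a - 1 - t^2 - 2 * t) / ((a + t)^2 * (a + t + 1)^2)\<bar>
      \<le> (a + t)^2 / ((a + t)^2 * (a + t + 1)^2)"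
    by (simp add: abs_divide)
  also have "\<dots> = 1 / (a + t + 1)^2" using pos by (simp add: field_simps)
  also have "\<dots> \<le> 1 / (a + 1)^2"
    using pos t0 a by (intro divide_left_mono power_mono) auto
  finally show ?thesis .
qed

lemma branch_weight_diff_mult_branch_le:
  fixes a x y :: real
  assumes a: "1 \<le> a" and x: "x \<in> {0..1}" and y: "y \<in> {0..1}"
  shows "\<bar>branch_weight a x - branch_weight a y\<bar> * gauss_branch a y \<le> 1 / (a * (a + 1)^2) * \<bar>x - y\<bar>"
proof -
  have "\<bar>branch_weight a x - branch_weight a y\<bar> \<le> 1 / (a + 1)^2 * \<bar>x - y\<bar>"
    using field_differentiable_bound[of "{0..1}" "branch_weight a"
        "\<lambda>t. (a^2 - a - 1 - t^2 - 2 * t) / ((a + t)^2 * (a + t + 1)^2)" "1 / (a + 1)^2", OF _ _ _ x y]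
      has_field_derivative_branch_weight[OF a] abs_deriv_branch_weight_le[OF a]
    by (auto intro: has_field_derivative_at_within)
  moreover have "gauss_branch a y \<le> 1 / a" "0 \<le> gauss_branch a y"
    using a y by (auto simp: gauss_branch_def intro!: divide_left_mono)
  ultimately have "\<bar>branch_weight a x - branch_weight a y\<bar> * gauss_branch a y
      \<le> (1 / (a + 1)^2 * \<bar>x - y\<bar>) * (1 / a)"
    by (intro mult_mono) auto
  then show ?thesis by (simp add: mult.commute)
qed

lemma summable_branch_weight: "0 \<le> y \<Longrightarrow> summable (\<lambda>n. branch_weight (real n + 1) y)"
  using branch_weight_sums by (auto simp: sums_iff)

lemma suminf_branch_weight: "0 \<le> y \<Longrightarrow> (\<Sum>n. branch_weight (real n + 1) y) = 1"
  using branch_weight_sums by (auto simp: sums_iff)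

lemma abs_transfer_summand_le:
  assumes B: "\<And>x. x \<in> {0..1} \<Longrightarrow> \<bar>f x\<bar> \<le> B" and y: "y \<in> {0..1}"
  shows "norm (branch_weight (real n + 1) y * f (gauss_branch (real n + 1) y)) \<le> B * branch_weight (real n + 1) y"
  using B[OF gauss_branch_in_unit[OF y]] branch_weight_nonneg[of y "real n + 1"] y
  by (simp add: abs_mult mult.commute[of B] mult_left_mono)

lemma summable_transfer:
  assumes "\<And>x. x \<in> {0..1} \<Longrightarrow> \<bar>f x\<bar> \<le> B" and y: "y \<in> {0..1}"
  shows "summable (\<lambda>n. branch_weight (real n + 1) y * f (gauss_branch (real n + 1) y))"
proof (rule summable_comparison_test)
  show "summable (\<lambda>n. B * branch_weight (real n + 1) y)"
    using y by (intro summable_mult summable_branch_weight) auto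
qed (use abs_transfer_summand_le[of f B y, OF assms] in blast)

lemma abs_transfer_le:
  assumes B: "\<And>x. x \<in> {0..1} \<Longrightarrow> \<bar>f x\<bar> \<le> B" and y: "y \<in> {0..1}"
  shows "\<bar>transfer f y\<bar> \<le> B"
proof -
  have sB: "summable (\<lambda>n. B * branch_weight (real n + 1) y)"
    using y by (intro summable_mult summable_branch_weight) auto
  have sn: "summable (\<lambda>n. norm (branch_weight (real n + 1) y * f (gauss_branch (real n + 1) y)))"
    by (rule summable_comparison_test[OF _ sB]) (use abs_transfer_summand_le[of f B y, OF B y] in auto)
  have "\<bar>transfer f y\<bar> \<le> (\<Sum>n. norm (branch_weight (real n + 1) y * f (gauss_branch (real n + 1) y)))"
    unfolding transfer_def using summable_norm[OF sn] by simp
  also have "\<dots> \<le> (\<Sum>n. B * branch_weight (real n + 1) y)"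
    by (rule suminf_le[OF abs_transfer_summand_le[of f B y, OF B y] sn sB])
  also have "\<dots> = B" using suminf_mult[OF summable_branch_weight, of y B] y by (simp add: suminf_branch_weight)
  finally show ?thesis .
qed

lemma transfer_nonneg:
  assumes "\<And>x. x \<in> {0..1} \<Longrightarrow> \<bar>f x\<bar> \<le> B" and nonneg: "\<And>x. x \<in> {0..1} \<Longrightarrow> 0 \<le> f x"
    and y: "y \<in> {0..1}"
  shows "0 \<le> transfer f y"
  unfolding transfer_def
  by (rule suminf_nonneg[OF summable_transfer[OF assms(1) y]])
    (use y gauss_branch_in_unit[OF y] nonneg in \<open>auto intro!: mult_nonneg_nonneg branch_weight_nonneg\<close>)

lemma borel_measurable_transfer[measurable]:
  assumes [measurable]: "f \<in> borel_measurable borel"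
  shows "transfer f \<in> borel_measurable borel"
proof -
  have [measurable]: "\<And>n. (\<lambda>x. f (gauss_branch (real n + 1) x)) \<in> borel_measurable borel"
    by (rule measurable_compose[OF borel_measurable_gauss_branch]) simp
  show ?thesis unfolding transfer_def[abs_def] by measurable
qed

definition branch_lipschitz_coeff :: "nat \<Rightarrow> real" where
  "branch_lipschitz_coeff n = (real n + 3) / ((real n + 1)^2 * (real n + 2)^2)"

text \<open>\<open>699/720\<close> is the sum of the first three coefficients plus \<open>3/40\<close>, a telescoping bound
  for the rest of the series.\<close>
definition transfer_contraction :: real where
  "transfer_contraction = 699 / 720"

lemma transfer_contraction_bounds: "0 < transfer_contraction" "transfer_contraction < 1"
  by (simp_all add: transfer_contraction_def)

lemma branch_lipschitz_coeff_eq: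
  "branch_lipschitz_coeff n = 2 / ((real n + 1)^2 * (real n + 1 + 1)^2) + 1 / ((real n + 1) * (real n + 1 + 1)^2)"
proof -
  define a where "a = real n + 1"
  have "1 / (a * (a + 1)^2) = a / (a^2 * (a + 1)^2)" by (simp add: a_def power2_eq_square)
  then show ?thesis
    unfolding a_def[symmetric] by (simp add: branch_lipschitz_coeff_def a_def add_divide_distrib add_ac)
qed

lemma branch_lipschitz_coeff_shift_le:
  "branch_lipschitz_coeff (n + 3) \<le> 3 / 10 * (1 / (real n + 4) - 1 / (real n + 1 + 4))"
proof -
  define m where "m = real n + 3"
  have m: "3 \<le> m" by (simp add: m_def)
  have "3 * m \<le> m * m" using mult_right_mono[OF m, of m] m by simp
  then have "10 * (m + 3) \<le> 3 * (m * m) + 9 * m + 6" using m by (smt (verit))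
  also have "\<dots> = 3 * ((m + 1) * (m + 2))" by (simp add: algebra_simps)
  finally have "10 * (m + 3) \<le> 3 * ((m + 1) * (m + 2))" .
  moreover have "0 < (m + 1) * (m + 2)" using m by simp
  ultimately have "(m + 3) / ((m + 1) * (m + 2)) / ((m + 1) * (m + 2)) \<le> 3 / 10 / ((m + 1) * (m + 2))"
    by (intro divide_right_mono) (simp_all add: pos_divide_le_eq)
  then have "(m + 3) / ((m + 1)^2 * (m + 2)^2) \<le> 3 / 10 / ((m + 1) * (m + 2))"
    by (simp add: power2_eq_square mult_ac)
  then show ?thesis
    by (simp add: branch_lipschitz_coeff_def m_def divide_simps add_ac)
qed

lemma summable_branch_lipschitz_coeff: "summable branch_lipschitz_coeff"
  and suminf_branch_lipschitz_coeff_le: "suminf branch_lipschitz_coeff \<le> transfer_contraction"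
proof -
  have tail: "(\<lambda>n. 3 / 10 * (1 / (real n + 4) - 1 / (real n + 1 + 4))) sums (3 / 10 * (1 / 4))"
    by (intro sums_mult telescoping_inverse_sums) auto
  have shifted: "summable (\<lambda>n. branch_lipschitz_coeff (n + 3))"
    by (rule summable_comparison_test[OF _ sums_summable[OF tail]])
      (use branch_lipschitz_coeff_shift_le in \<open>auto simp: branch_lipschitz_coeff_def\<close>)
  then show s: "summable branch_lipschitz_coeff" by simp
  have "(\<Sum>n. branch_lipschitz_coeff (n + 3)) \<le> 3 / 10 * (1 / 4)"
    using suminf_le[OF branch_lipschitz_coeff_shift_le shifted sums_summable[OF tail]] tail
    by (simp add: sums_iff)
  then show "suminf branch_lipschitz_coeff \<le> transfer_contraction"
    unfolding suminf_split_initial_segment[OF s, of 3]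
    by (simp add: transfer_contraction_def branch_lipschitz_coeff_def numeral_3_eq_3 power2_eq_square)
qed

lemma transfer_summand_diff_le:
  fixes n :: nat
  assumes L: "L-lipschitz_on {0..1} f" and x: "x \<in> {0..1}" and y: "y \<in> {0..1}"
  defines "a \<equiv> real n + 1"
  shows "\<bar>branch_weight a x * (f (gauss_branch a x) - f (gauss_branch a y))
          + (branch_weight a x - branch_weight a y) * (f (gauss_branch a y) - f 0)\<bar>
         \<le> L * \<bar>x - y\<bar> * branch_lipschitz_coeff n"
proof -
  have a: "1 \<le> a" by (simp add: a_def)
  have ux: "gauss_branch a x \<in> {0..1}" and uy: "gauss_branch a y \<in> {0..1}"
    using gauss_branch_in_unit x y by (auto simp: a_def)
  have w0: "0 \<le> branch_weight a x" using x a by (intro branch_weight_nonneg) auto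
  have L0: "0 \<le> L" using lipschitz_on_nonneg[OF L] .
  have "\<bar>f (gauss_branch a x) - f (gauss_branch a y)\<bar> \<le> L * \<bar>gauss_branch a x - gauss_branch a y\<bar>"
    using lipschitz_onD[OF L ux uy] by (simp add: dist_real_def)
  moreover have "\<bar>f (gauss_branch a y) - f 0\<bar> \<le> L * gauss_branch a y"
    using lipschitz_onD[OF L uy, of 0] uy by (simp add: dist_real_def)
  moreover have "\<bar>branch_weight a x * (f (gauss_branch a x) - f (gauss_branch a y))
          + (branch_weight a x - branch_weight a y) * (f (gauss_branch a y) - f 0)\<bar>
      \<le> branch_weight a x * \<bar>f (gauss_branch a x) - f (gauss_branch a y)\<bar>
        + \<bar>branch_weight a x - branch_weight a y\<bar> * \<bar>f (gauss_branch a y) - f 0\<bar>"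
    by (rule order_trans[OF abs_triangle_ineq]) (simp add: abs_mult abs_of_nonneg[OF w0])
  ultimately have "\<bar>branch_weight a x * (f (gauss_branch a x) - f (gauss_branch a y))
          + (branch_weight a x - branch_weight a y) * (f (gauss_branch a y) - f 0)\<bar>
      \<le> branch_weight a x * (L * \<bar>gauss_branch a x - gauss_branch a y\<bar>)
        + \<bar>branch_weight a x - branch_weight a y\<bar> * (L * gauss_branch a y)"
    using w0 by (smt (verit) abs_ge_zero mult_left_mono)
  also have "\<dots> = L * (branch_weight a x * \<bar>gauss_branch a x - gauss_branch a y\<bar>
      + \<bar>branch_weight a x - branch_weight a y\<bar> * gauss_branch a y)"
    by (simp add: algebra_simps)
  also have "\<dots> \<le> L * (2 / (a^2 * (a + 1)^2) * \<bar>x - y\<bar> + 1 / (a * (a + 1)^2) * \<bar>x - y\<bar>)"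
    using L0 branch_weight_mult_branch_diff_le[OF a x y] branch_weight_diff_mult_branch_le[OF a x y]
    by (intro mult_left_mono add_mono) auto
  also have "\<dots> = L * \<bar>x - y\<bar> * branch_lipschitz_coeff n"
    by (simp add: branch_lipschitz_coeff_eq a_def algebra_simps)
  finally show ?thesis .
qed

text \<open>Since the weights sum to \<open>1\<close>, the constant \<open>f 0\<close> may be subtracted from \<open>f\<close>;
  only the oscillation of \<open>f\<close> then enters the estimate.\<close>
lemma lipschitz_transfer:
  assumes L: "L-lipschitz_on {0..1} f" and B: "\<And>x. x \<in> {0..1} \<Longrightarrow> \<bar>f x\<bar> \<le> B"
  shows "(transfer_contraction * L)-lipschitz_on {0..1} (transfer f)"
proof (rule lipschitz_onI)
  show "0 \<le> transfer_contraction * L"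
    using lipschitz_on_nonneg[OF L] transfer_contraction_bounds by simp
next
  fix x y :: real assume x: "x \<in> {0..1}" and y: "y \<in> {0..1}"
  define w where "w n t = branch_weight (real n + 1) t" for n t
  define g where "g n t = f (gauss_branch (real n + 1) t)" for n t
  define d where "d n = w n x * (g n x - g n y) + (w n x - w n y) * (g n y - f 0)" for n
  have "(\<lambda>n. (w n x * g n x - w n y * g n y) - (w n x * f 0 - w n y * f 0)) sums
        ((transfer f x - transfer f y) - (1 * f 0 - 1 * f 0))"
    using summable_transfer[of f B, OF B] x y branch_weight_sums[of x] branch_weight_sums[of y]
    by (intro sums_diff sums_mult2) (auto simp: transfer_def w_def g_def summable_sums)
  moreover have "(\<lambda>n. (w n x * g n x - w n y * g n y) - (w n x * f 0 - w n y * f 0)) = d"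
    by (auto simp: d_def algebra_simps)
  ultimately have sd: "d sums (transfer f x - transfer f y)" by simp
  have db: "\<bar>d n\<bar> \<le> L * \<bar>x - y\<bar> * branch_lipschitz_coeff n" for n
    unfolding d_def w_def g_def by (rule transfer_summand_diff_le[OF L x y])
  have sb: "summable (\<lambda>n. L * \<bar>x - y\<bar> * branch_lipschitz_coeff n)"
    by (intro summable_mult summable_branch_lipschitz_coeff)
  have sn: "summable (\<lambda>n. norm (d n))"
    by (rule summable_comparison_test[OF _ sb]) (use db in auto)
  have "\<bar>transfer f x - transfer f y\<bar> \<le> (\<Sum>n. norm (d n))"
    using sd summable_norm[OF sn] by (simp add: sums_iff)
  also have "\<dots> \<le> (\<Sum>n. L * \<bar>x - y\<bar> * branch_lipschitz_coeff n)"
    by (rule suminf_le[OF _ sn sb]) (use db in auto)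
  also have "\<dots> = L * \<bar>x - y\<bar> * suminf branch_lipschitz_coeff"
    by (rule suminf_mult[OF summable_branch_lipschitz_coeff])
  also have "\<dots> \<le> L * \<bar>x - y\<bar> * transfer_contraction"
    using lipschitz_on_nonneg[OF L] suminf_branch_lipschitz_coeff_le by (intro mult_left_mono) auto
  finally show "dist (transfer f x) (transfer f y) \<le> transfer_contraction * L * dist x y"
    by (simp add: dist_real_def mult_ac)
qed

lemma abs_funpow_transfer_le:
  "(\<And>x. x \<in> {0..1} \<Longrightarrow> \<bar>f x\<bar> \<le> B) \<Longrightarrow> y \<in> {0..1} \<Longrightarrow> \<bar>(transfer ^^ j) f y\<bar> \<le> B"
  by (induction j arbitrary: y) (auto intro: abs_transfer_le)

lemma borel_measurable_funpow_transfer[measurable]: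
  "f \<in> borel_measurable borel \<Longrightarrow> (transfer ^^ j) f \<in> borel_measurable borel"
  by (induction j) auto

lemma lipschitz_funpow_transfer:
  assumes "L-lipschitz_on {0..1} f" "\<And>x. x \<in> {0..1} \<Longrightarrow> \<bar>f x\<bar> \<le> B"
  shows "(transfer_contraction ^ j * L)-lipschitz_on {0..1} ((transfer ^^ j) f)"
proof (induction j)
  case (Suc j)
  then show ?case
    using lipschitz_transfer[OF Suc.IH abs_funpow_transfer_le[where f=f and B=B and j=j, OF assms(2)]]
    by (simp add: mult.assoc)
qed (use assms(1) in simp)

lemma transfer_nn_eq_transfer:
  assumes "\<And>x. x \<in> {0..1} \<Longrightarrow> \<bar>f x\<bar> \<le> B" and nonneg: "\<And>x. x \<in> {0..1} \<Longrightarrow> 0 \<le> f x"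
    and y: "y \<in> {0..1}"
  shows "transfer_nn (\<lambda>x. ennreal (f x)) y = ennreal (transfer f y)"
proof -
  have "0 \<le> branch_weight (real n + 1) y * f (gauss_branch (real n + 1) y)" for n
    using y gauss_branch_in_unit[OF y] nonneg by (auto intro!: mult_nonneg_nonneg branch_weight_nonneg)
  then show ?thesis
    unfolding transfer_nn_def transfer_def using y gauss_branch_in_unit[OF y] nonneg
    by (subst suminf_ennreal2[symmetric, OF _ summable_transfer[of f B, OF assms(1) y]])
      (auto simp: ennreal_mult branch_weight_nonneg)
qed

lemma nn_integral_comp_gauss_funpow:
  assumes "f \<in> borel_measurable borel" "S \<in> sets borel"
    and "\<And>x. x \<in> {0..1} \<Longrightarrow> \<bar>f x\<bar> \<le> B" and "\<And>x. x \<in> {0..1} \<Longrightarrow> 0 \<le> f x"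
  shows "(\<integral>\<^sup>+x. ennreal (f x) * indicator S ((gauss ^^ j) x) \<partial>gauss_measure)
       = (\<integral>\<^sup>+y. ennreal ((transfer ^^ j) f y) * indicator S y \<partial>gauss_measure)"
  using assms
proof (induction j arbitrary: f)
  case (Suc j)
  note [measurable] = Suc.prems(1,2)
  have "(\<integral>\<^sup>+x. ennreal (f x) * indicator S ((gauss ^^ Suc j) x) \<partial>gauss_measure)
      = (\<integral>\<^sup>+x. ennreal (f x) * indicator ((gauss ^^ j) -` S) (gauss x) \<partial>gauss_measure)"
    by (simp add: funpow_Suc_right indicator_def del: funpow.simps)
  also have "\<dots> = (\<integral>\<^sup>+y. indicator ((gauss ^^ j) -` S) y * transfer_nn (\<lambda>x. ennreal (f x)) y \<partial>gauss_measure)"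
    by (rule nn_integral_comp_gauss) auto
  also have "\<dots> = (\<integral>\<^sup>+y. ennreal (transfer f y) * indicator S ((gauss ^^ j) y) \<partial>gauss_measure)"
  proof (rule nn_integral_cong_AE)
    have eq: "transfer_nn (\<lambda>x. ennreal (f x)) y = ennreal (transfer f y)" if "0 < y \<and> y < 1" for y
      using transfer_nn_eq_transfer[of f B y] Suc.prems(3,4) that by auto
    show "AE y in gauss_measure. indicator ((gauss ^^ j) -` S) y * transfer_nn (\<lambda>x. ennreal (f x)) y
        = ennreal (transfer f y) * indicator S ((gauss ^^ j) y)"
      using AE_gauss_measure_in_unit by eventually_elim (simp add: eq indicator_def)
  qed
  also have "\<dots> = (\<integral>\<^sup>+y. ennreal ((transfer ^^ j) (transfer f) y) * indicator S y \<partial>gauss_measure)"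
  proof (rule Suc.IH)
    show "\<bar>transfer f x\<bar> \<le> B" "0 \<le> transfer f x" if "x \<in> {0..1}" for x
      using abs_transfer_le[of f B x] transfer_nonneg[of f B x] Suc.prems(3,4) that by simp_all
  qed simp_all
  finally show ?case by (simp add: funpow_Suc_right del: funpow.simps)
qed simp

lemma le_of_nn_integral_eq:
  assumes [measurable]: "g \<in> borel_measurable borel"
    and I: "(\<integral>\<^sup>+y. ennreal (g y) \<partial>gauss_measure) = ennreal m" and m: "0 \<le> m"
    and c: "\<And>z. z \<in> {0..1} \<Longrightarrow> c \<le> g z"
  shows "c \<le> m"
proof (cases "c \<le> 0")
  case False
  have "ennreal c = (\<integral>\<^sup>+y. ennreal c \<partial>gauss_measure)"
    using emeasure_gauss_measure_UNIV by simp
  also have "\<dots> \<le> (\<integral>\<^sup>+y. ennreal (g y) \<partial>gauss_measure)"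
    by (rule nn_integral_mono_AE)
      (use AE_gauss_measure_in_unit in \<open>eventually_elim, auto intro!: ennreal_leI c\<close>)
  finally show ?thesis using I False by (simp add: ennreal_le_iff m)
qed (use m in simp)

lemma density_of_convergents_le_2:
  assumes "admissible p" and y: "y \<in> {0..1}"
  shows "density_of_convergents p y \<le> 2"
proof -
  obtain \<alpha> \<beta> \<gamma> \<delta> where p: "p = (\<alpha>, \<beta>, \<gamma>, \<delta>)" by (cases p) auto
  have "1 \<le> \<alpha> + \<beta> * y" "1 \<le> \<gamma> + \<delta> * y"
    using assms by (auto simp: admissible_def p intro!: add_increasing2 mult_nonneg_nonneg)
  then have "1 \<le> (\<alpha> + \<beta> * y) * (\<gamma> + \<delta> * y)" by (metis mult_mono' mult_1 zero_le_one)
  then have "(1 + y) / ((\<alpha> + \<beta> * y) * (\<gamma> + \<delta> * y)) \<le> (1 + y) / 1"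
    using y by (intro divide_left_mono) auto
  then show ?thesis using y by (simp add: density_of_convergents_def p)
qed

lemma density_of_convergents_le_8_times:
  assumes "admissible p" and y: "y \<in> {0..1}" and z: "z \<in> {0..1}"
  shows "density_of_convergents p y \<le> 8 * density_of_convergents p z"
proof -
  obtain \<alpha> \<beta> \<gamma> \<delta> where p: "p = (\<alpha>, \<beta>, \<gamma>, \<delta>)" by (cases p) auto
  have h: "1 \<le> \<alpha>" "0 \<le> \<beta>" "\<beta> \<le> \<alpha>" "1 \<le> \<gamma>" "0 \<le> \<delta>" "\<delta> \<le> \<gamma>"
    using assms by (auto simp: admissible_def p)
  have y0: "0 \<le> y" "y \<le> 1" and z0: "0 \<le> z" "z \<le> 1" using y z by auto
  have py: "0 < \<alpha> + \<beta> * y" "0 < \<gamma> + \<delta> * y" and pz: "0 < \<alpha> + \<beta> * z" "0 < \<gamma> + \<delta> * z"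
    using h y0 z0 by (auto intro!: add_pos_nonneg mult_nonneg_nonneg)
  have "\<beta> * z \<le> \<alpha>" "\<delta> * z \<le> \<gamma>" using h z0 by (metis mult_right_le_one_le order_trans)+
  then have "\<alpha> + \<beta> * z \<le> 2 * (\<alpha> + \<beta> * y)" "\<gamma> + \<delta> * z \<le> 2 * (\<gamma> + \<delta> * y)"
    using h y0 by (smt (verit) mult_nonneg_nonneg)+
  then have "1 / (\<alpha> + \<beta> * y) \<le> 2 / (\<alpha> + \<beta> * z)" "1 / (\<gamma> + \<delta> * y) \<le> 2 / (\<gamma> + \<delta> * z)"
    using py pz by (simp_all add: divide_simps)
  moreover have "1 + y \<le> 2 * (1 + z)" using y0 z0 by simp
  ultimately have "(1 + y) * (1 / (\<alpha> + \<beta> * y)) * (1 / (\<gamma> + \<delta> * y))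
      \<le> (2 * (1 + z)) * (2 / (\<alpha> + \<beta> * z)) * (2 / (\<gamma> + \<delta> * z))"
    using py pz y0 by (intro mult_mono) auto
  then show ?thesis by (simp add: density_of_convergents_def p)
qed

lemma density_of_convergents_has_derivative:
  assumes "admissible p" and t: "t \<in> {0..1}"
  shows "\<exists>d. (density_of_convergents p has_field_derivative d) (at t) \<and> \<bar>d\<bar> \<le> density_of_convergents p t"
proof -
  obtain \<alpha> \<beta> \<gamma> \<delta> where p: "p = (\<alpha>, \<beta>, \<gamma>, \<delta>)" by (cases p) auto
  have h: "1 \<le> \<alpha>" "0 \<le> \<beta>" "\<beta> \<le> \<alpha>" "1 \<le> \<gamma>" "0 \<le> \<delta>" "\<delta> \<le> \<gamma>"
    using assms by (auto simp: admissible_def p)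
  have t0: "0 \<le> t" "t \<le> 1" using t by auto
  define A where "A = \<alpha> + \<beta> * t"
  define G where "G = \<gamma> + \<delta> * t"
  have A: "0 < A" "(1 + t) * \<beta> \<le> A" and G: "0 < G" "(1 + t) * \<delta> \<le> G"
    using h t0 unfolding A_def G_def
    by (auto intro!: add_pos_nonneg mult_nonneg_nonneg simp: algebra_simps)
  define N where "N = A * G - (1 + t) * (\<beta> * G + A * \<delta>)"
  have deriv: "(density_of_convergents p has_field_derivative N / ((A * G) * (A * G))) (at t)"
  proof -
    have "((\<lambda>t. (\<alpha> + \<beta> * t) * (\<gamma> + \<delta> * t)) has_field_derivative \<beta> * G + A * \<delta>) (at t)"
      unfolding A_def G_def by (auto intro!: derivative_eq_intros simp: algebra_simps)
    from DERIV_divide[OF DERIV_add[OF DERIV_const DERIV_ident] this] show ?thesis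
      using A G by (simp add: density_of_convergents_def[abs_def] p N_def A_def G_def)
  qed
  have "\<bar>N\<bar> \<le> A * G"
  proof -
    have "(1 + t) * (\<beta> * G) \<le> A * G" "A * ((1 + t) * \<delta>) \<le> A * G"
      using A G by (simp_all add: mult.assoc[symmetric] mult_right_mono mult_left_mono)
    moreover have "0 \<le> (1 + t) * (\<beta> * G + A * \<delta>)"
      using A G h t0 by (auto intro!: mult_nonneg_nonneg add_nonneg_nonneg)
    ultimately show ?thesis by (simp add: N_def algebra_simps)
  qed
  then have "\<bar>N / ((A * G) * (A * G))\<bar> \<le> 1 / (A * G)"
    using A G by (simp add: abs_divide divide_simps)
  also have "\<dots> \<le> (1 + t) / (A * G)" using A G t0 by (intro divide_right_mono) auto
  also have "\<dots> = density_of_convergents p t" by (simp add: density_of_convergents_def p A_def G_def)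
  finally show ?thesis using deriv by blast
qed

lemma lipschitz_density_of_convergents:
  assumes "admissible p" and M: "\<And>t. t \<in> {0..1} \<Longrightarrow> density_of_convergents p t \<le> M"
  shows "M-lipschitz_on {0..1} (density_of_convergents p)"
proof -
  obtain d where d: "\<And>t. t \<in> {0..1} \<Longrightarrow>
      (density_of_convergents p has_field_derivative d t) (at t) \<and> \<bar>d t\<bar> \<le> density_of_convergents p t"
    using density_of_convergents_has_derivative[OF assms(1)] by metis
  show ?thesis
  proof (rule lipschitz_onI)
    fix x y :: real assume "x \<in> {0..1}" "y \<in> {0..1}"
    have "norm (density_of_convergents p x - density_of_convergents p y) \<le> M * norm (x - y)"
    proof (rule field_differentiable_bound[where S="{0..1}" and f'=d])
      fix z :: real assume z: "z \<in> {0..1}"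
      show "(density_of_convergents p has_field_derivative d z) (at z within {0..1})"
        using d[OF z] by (blast intro: has_field_derivative_at_within)
      show "norm (d z) \<le> M" using d[OF z] M[OF z] by simp
    qed (use \<open>x \<in> {0..1}\<close> \<open>y \<in> {0..1}\<close> in auto)
    then show "dist (density_of_convergents p x) (density_of_convergents p y) \<le> M * dist x y"
      by (simp add: dist_real_def)
  next
    show "0 \<le> M" using M[of 0] density_of_convergents_nonneg[OF assms(1), of 0] by simp
  qed
qed

section \<open>Exponential mixing of digit cylinders\<close>

lemma abs_cylinder_density_le: "\<forall>d\<in>set s. 0 < d \<Longrightarrow> t \<in> {0..1} \<Longrightarrow> \<bar>cylinder_density s t\<bar> \<le> 2"
  using cylinder_density_nonneg[of s t] density_of_convergents_le_2[OF admissible_convergents, of s t]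
  by (auto simp: cylinder_density_def)

lemma cylinder_density_le:
  assumes pos: "\<forall>d\<in>set s. 0 < d" and t: "t \<in> {0..1}"
  shows "cylinder_density s t \<le> 8 * measure gauss_measure (digit_cylinder s)"
proof -
  have "(\<integral>\<^sup>+y. ennreal (cylinder_density s y) \<partial>gauss_measure)
      = ennreal (measure gauss_measure (digit_cylinder s))"
    using emeasure_digit_cylinder[OF pos] gauss_measure.emeasure_eq_measure by simp
  then have "cylinder_density s t / 8 \<le> measure gauss_measure (digit_cylinder s)"
  proof (rule le_of_nn_integral_eq[OF borel_measurable_cylinder_density _ measure_nonneg])
    fix z :: real assume "z \<in> {0..1}"
    from density_of_convergents_le_8_times[OF admissible_convergents[OF pos] t this]
    show "cylinder_density s t / 8 \<le> cylinder_density s z"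
      by (simp add: cylinder_density_def)
  qed
  then show ?thesis by simp
qed

lemma lipschitz_cylinder_density:
  "\<forall>d\<in>set s. 0 < d \<Longrightarrow>
    (8 * measure gauss_measure (digit_cylinder s))-lipschitz_on {0..1} (cylinder_density s)"
  unfolding cylinder_density_def
  by (rule lipschitz_density_of_convergents[OF admissible_convergents])
    (use cylinder_density_le in \<open>auto simp: cylinder_density_def\<close>)

text \<open>\<open>(transfer ^^ j) (cylinder_density s)\<close> is the density of the image of the Gauss
  measure restricted to the cylinder under \<open>gauss ^^ (length s + j)\<close>.\<close>
lemma funpow_transfer_cylinder_density_le:
  assumes pos: "\<forall>d\<in>set s. 0 < d" and y: "y \<in> {0..1}"
  defines "m \<equiv> measure gauss_measure (digit_cylinder s)"
  shows "(transfer ^^ j) (cylinder_density s) y \<le> m + transfer_contraction ^ j * (8 * m)"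
proof -
  let ?G = "(transfer ^^ j) (cylinder_density s)"
  have bounds: "\<And>x. x \<in> {0..1} \<Longrightarrow> \<bar>cylinder_density s x\<bar> \<le> 2"
    "\<And>x. x \<in> {0..1} \<Longrightarrow> 0 \<le> cylinder_density s x"
    using abs_cylinder_density_le[OF pos] cylinder_density_nonneg[OF pos] by auto
  have lip: "(transfer_contraction ^ j * (8 * m))-lipschitz_on {0..1} ?G"
    unfolding m_def by (rule lipschitz_funpow_transfer[OF lipschitz_cylinder_density[OF pos] bounds(1)])
  have "(\<integral>\<^sup>+y. ennreal (?G y) \<partial>gauss_measure)
      = (\<integral>\<^sup>+x. ennreal (cylinder_density s x) * indicator UNIV ((gauss ^^ j) x) \<partial>gauss_measure)"
    using nn_integral_comp_gauss_funpow[OF borel_measurable_cylinder_density _ bounds, of UNIV j] by simp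
  also have "\<dots> = ennreal m"
    using emeasure_digit_cylinder[OF pos] by (simp add: m_def gauss_measure.emeasure_eq_measure)
  finally have "?G y - transfer_contraction ^ j * (8 * m) \<le> m"
  proof (rule le_of_nn_integral_eq[OF borel_measurable_funpow_transfer[OF borel_measurable_cylinder_density]])
    fix z :: real assume z: "z \<in> {0..1}"
    have "\<bar>?G y - ?G z\<bar> \<le> transfer_contraction ^ j * (8 * m) * \<bar>y - z\<bar>"
      using lipschitz_onD[OF lip y z] by (simp add: dist_real_def)
    also have "\<dots> \<le> transfer_contraction ^ j * (8 * m) * 1"
      using y z lipschitz_on_nonneg[OF lip] by (intro mult_left_mono) auto
    finally show "?G y - transfer_contraction ^ j * (8 * m) \<le> ?G z" by simp
  qed (simp add: m_def)
  then show ?thesis by simp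
qed

lemma emeasure_digit_cylinder_inter_vimage_le:
  assumes pos: "\<forall>d\<in>set s. 0 < d"
  defines "m \<equiv> measure gauss_measure (digit_cylinder s)"
  shows "emeasure gauss_measure (digit_cylinder s \<inter> (gauss ^^ (length s + j)) -` digit_cylinder s)
         \<le> ennreal (m * (m + transfer_contraction ^ j * (8 * m)))"
proof -
  let ?C = "digit_cylinder s" and ?c = "m + transfer_contraction ^ j * (8 * m)"
  have m0: "0 \<le> m" unfolding m_def by simp
  have "(indicator (?C \<inter> (gauss ^^ (length s + j)) -` ?C) :: real \<Rightarrow> ennreal)
      = (\<lambda>x. indicator ?C x * indicator ((gauss ^^ j) -` ?C) ((gauss ^^ length s) x))"
    by (auto simp: indicator_def funpow_add add.commute[of "length s"])
  then have "emeasure gauss_measure (?C \<inter> (gauss ^^ (length s + j)) -` ?C)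
      = (\<integral>\<^sup>+x. indicator ?C x * indicator ((gauss ^^ j) -` ?C) ((gauss ^^ length s) x) \<partial>gauss_measure)"
    by (simp flip: nn_integral_indicator)
  also have "\<dots> = (\<integral>\<^sup>+y. ennreal (cylinder_density s y) * indicator ?C ((gauss ^^ j) y) \<partial>gauss_measure)"
    by (subst nn_integral_digit_cylinder[OF pos]) (auto simp: indicator_def)
  also have "\<dots> = (\<integral>\<^sup>+y. ennreal ((transfer ^^ j) (cylinder_density s) y) * indicator ?C y \<partial>gauss_measure)"
    by (rule nn_integral_comp_gauss_funpow[of _ _ 2])
      (use abs_cylinder_density_le[OF pos] cylinder_density_nonneg[OF pos] in auto)
  also have "\<dots> \<le> (\<integral>\<^sup>+y. ennreal ?c * indicator ?C y \<partial>gauss_measure)"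
    by (rule nn_integral_mono_AE) (use AE_gauss_measure_in_unit in \<open>eventually_elim,
        auto intro!: mult_right_mono ennreal_leI funpow_transfer_cylinder_density_le[OF pos]
          simp: m_def\<close>)
  also have "\<dots> = ennreal ?c * emeasure gauss_measure ?C"
    by (simp add: nn_integral_cmult_indicator)
  also have "\<dots> = ennreal (m * ?c)"
    using m0 by (simp add: m_def gauss_measure.emeasure_eq_measure ennreal_mult'[symmetric] mult.commute)
  finally show ?thesis .
qed

lemma measure_digit_cylinder_inter_vimage_le:
  assumes pos: "\<forall>d\<in>set s. 0 < d"
  defines "m \<equiv> measure gauss_measure (digit_cylinder s)"
  shows "measure gauss_measure (digit_cylinder s \<inter> (gauss ^^ d) -` digit_cylinder s)
         \<le> m^2 + 8 / transfer_contraction ^ length s * m * transfer_contraction ^ d"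
proof -
  let ?\<theta> = transfer_contraction
  have m: "0 \<le> m" "m \<le> 1" unfolding m_def by auto
  have \<theta>: "0 < ?\<theta>" "?\<theta> < 1" by (rule transfer_contraction_bounds)+
  show ?thesis
  proof (cases "length s \<le> d")
    case True
    then obtain j where j: "d = length s + j" using le_Suc_ex by blast
    have "ennreal (measure gauss_measure (digit_cylinder s \<inter> (gauss ^^ d) -` digit_cylinder s))
        \<le> ennreal (m * (m + ?\<theta> ^ j * (8 * m)))"
      using emeasure_digit_cylinder_inter_vimage_le[OF pos, of j]
      by (simp add: j m_def gauss_measure.emeasure_eq_measure)
    then have "measure gauss_measure (digit_cylinder s \<inter> (gauss ^^ d) -` digit_cylinder s)
        \<le> m * (m + ?\<theta> ^ j * (8 * m))"
      using m \<theta> by (simp add: ennreal_le_iff)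
    also have "\<dots> = m^2 + 8 * ?\<theta> ^ j * (m * m)" by (simp add: power2_eq_square algebra_simps)
    also have "\<dots> \<le> m^2 + 8 * ?\<theta> ^ j * m"
      using mult_left_le[OF m(2,1)] \<theta> by (intro add_left_mono mult_left_mono) auto
    also have "8 * ?\<theta> ^ j * m = 8 / ?\<theta> ^ length s * m * ?\<theta> ^ d"
      using \<theta> by (simp add: j power_add)
    finally show ?thesis .
  next
    case False
    have "measure gauss_measure (digit_cylinder s \<inter> (gauss ^^ d) -` digit_cylinder s) \<le> m"
      unfolding m_def by (intro gauss_measure.finite_measure_mono) auto
    also have "m \<le> 8 / ?\<theta> ^ length s * m * ?\<theta> ^ d"
    proof -
      have "?\<theta> ^ length s \<le> ?\<theta> ^ d" using False \<theta> by (intro power_decreasing) auto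
      moreover have "0 \<le> ?\<theta> ^ d" using \<theta> by simp
      ultimately have "m * ?\<theta> ^ length s \<le> m * (8 * ?\<theta> ^ d)"
        using m by (intro mult_left_mono) auto
      then show ?thesis using \<theta> by (simp add: field_simps)
    qed
    also have "\<dots> \<le> m^2 + 8 / ?\<theta> ^ length s * m * ?\<theta> ^ d" by simp
    finally show ?thesis by (simp add: m_def)
  qed
qed

lemma sum_power_less_le:
  fixes \<theta> :: real
  assumes "0 \<le> \<theta>" "\<theta> < 1"
  shows "(\<Sum>i<n. \<theta> ^ i) \<le> 1 / (1 - \<theta>)"
  using assms by (simp add: sum_gp_strict divide_right_mono)

text \<open>With truncated subtraction, \<open>(a - b) + (b - a)\<close> is the distance \<open>|a - b|\<close>.\<close>
lemma sum_power_dist_le: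
  fixes \<theta> :: real
  assumes "0 \<le> \<theta>" "\<theta> < 1"
  shows "(\<Sum>b<N. \<theta> ^ ((a - b) + (b - a))) \<le> 2 / (1 - \<theta>)"
proof -
  have split: "{..<N} = ({..<N} \<inter> {..a}) \<union> {a<..<N}" by auto
  have "(\<Sum>b<N. \<theta> ^ ((a - b) + (b - a)))
      = (\<Sum>b\<in>{..<N} \<inter> {..a}. \<theta> ^ ((a - b) + (b - a))) + (\<Sum>b\<in>{a<..<N}. \<theta> ^ ((a - b) + (b - a)))"
    by (subst split, rule sum.union_disjoint) auto
  also have "(\<Sum>b\<in>{..<N} \<inter> {..a}. \<theta> ^ ((a - b) + (b - a))) = (\<Sum>b\<in>{..<N} \<inter> {..a}. \<theta> ^ (Suc a - Suc b))"
    by (intro sum.cong) auto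
  also have "(\<Sum>b\<in>{a<..<N}. \<theta> ^ ((a - b) + (b - a))) = (\<Sum>b\<in>{a<..<N}. \<theta> ^ (b - a))"
    by (intro sum.cong) auto
  also have "(\<Sum>b\<in>{..<N} \<inter> {..a}. \<theta> ^ (Suc a - Suc b)) \<le> (\<Sum>b<Suc a. \<theta> ^ (Suc a - Suc b))"
    using assms by (intro sum_mono2) auto
  also have "\<dots> = (\<Sum>i<Suc a. \<theta> ^ i)" by (rule sum.nat_diff_reindex)
  also have "(\<Sum>b\<in>{a<..<N}. \<theta> ^ (b - a)) = (\<Sum>i\<in>(\<lambda>b. b - a) ` {a<..<N}. \<theta> ^ i)"
    by (rule sum.reindex[symmetric, unfolded comp_def]) (auto simp: inj_on_def)
  also have "\<dots> \<le> (\<Sum>i<N. \<theta> ^ i)" using assms by (intro sum_mono2) auto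
  finally show ?thesis using sum_power_less_le[OF assms, of "Suc a"] sum_power_less_le[OF assms, of N]
    by simp
qed

section \<open>Variance of the number of visits and Chebyshev's inequality\<close>

lemma measure_vimage_funpow_inter_vimage_funpow:
  assumes [measurable]: "S \<in> sets borel"
  shows "measure gauss_measure ((gauss ^^ a) -` S \<inter> (gauss ^^ b) -` S)
       = measure gauss_measure (S \<inter> (gauss ^^ ((a - b) + (b - a))) -` S)"
proof -
  have *: "measure gauss_measure ((gauss ^^ a) -` S \<inter> (gauss ^^ b) -` S)
       = measure gauss_measure (S \<inter> (gauss ^^ (b - a)) -` S)" if "a \<le> b" for a b
  proof -
    have "gauss ^^ b = (gauss ^^ (b - a)) \<circ> (gauss ^^ a)"
      using that by (simp add: funpow_add[symmetric])
    then have "(gauss ^^ a) -` S \<inter> (gauss ^^ b) -` S = (gauss ^^ a) -` (S \<inter> (gauss ^^ (b - a)) -` S)"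
      by auto
    then show ?thesis by (simp only:) (rule measure_vimage_gauss_funpow, measurable)
  qed
  show ?thesis
  proof (cases "a \<le> b")
    case False
    then show ?thesis using *[of b a] by (simp add: Int_commute)
  qed (use * in simp)
qed

definition hit_count :: "nat list \<Rightarrow> nat \<Rightarrow> real \<Rightarrow> real" where
  "hit_count s N x = (\<Sum>n<N. indicator ((gauss ^^ n) -` digit_cylinder s) x)"

lemma borel_measurable_hit_count[measurable]: "hit_count s N \<in> borel_measurable borel"
  unfolding hit_count_def[abs_def] by measurable

lemma hit_count_bounds: "0 \<le> hit_count s N x" "hit_count s N x \<le> real N"
proof -
  show "0 \<le> hit_count s N x" unfolding hit_count_def by (intro sum_nonneg) auto
  have "hit_count s N x \<le> (\<Sum>n<N. 1)" unfolding hit_count_def by (intro sum_mono) (auto simp: indicator_def)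
  then show "hit_count s N x \<le> real N" by simp
qed

lemma integrable_indicator_gauss_measure:
  "A \<in> sets borel \<Longrightarrow> integrable gauss_measure (indicator A :: real \<Rightarrow> real)"
  by (rule integrable_real_indicator) (auto simp: less_top[symmetric])

lemma integrable_hit_count: "integrable gauss_measure (hit_count s N)"
  unfolding hit_count_def[abs_def]
  by (intro Bochner_Integration.integrable_sum integrable_indicator_gauss_measure) measurable

lemma integral_hit_count:
  "(\<integral>x. hit_count s N x \<partial>gauss_measure) = real N * measure gauss_measure (digit_cylinder s)"
  unfolding hit_count_def[abs_def]
  by (subst Bochner_Integration.integral_sum)
    (auto intro: integrable_indicator_gauss_measure simp: measure_vimage_gauss_funpow)

lemma integral_hit_count_squared:
  "(\<integral>x. (hit_count s N x)^2 \<partial>gauss_measure) = (\<Sum>a<N. \<Sum>b<N.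
     measure gauss_measure (digit_cylinder s \<inter> (gauss ^^ ((a - b) + (b - a))) -` digit_cylinder s))"
proof -
  have "(\<lambda>x. (hit_count s N x)^2) = (\<lambda>x. \<Sum>a<N. \<Sum>b<N.
      indicator ((gauss ^^ a) -` digit_cylinder s \<inter> (gauss ^^ b) -` digit_cylinder s) x)"
    unfolding hit_count_def power2_eq_square sum_product by (simp add: indicator_inter_arith)
  then show ?thesis
    by (simp add: Bochner_Integration.integral_sum integrable_indicator_gauss_measure
        measure_vimage_funpow_inter_vimage_funpow)
qed

lemma integrable_hit_count_squared: "integrable gauss_measure (\<lambda>x. (hit_count s N x)^2)"
  by (rule gauss_measure.integrable_const_bound[where B="real N ^ 2"])
    (use hit_count_bounds in \<open>auto intro!: power_mono\<close>)

lemma variance_hit_count_le: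
  assumes pos: "\<forall>d\<in>set s. 0 < d"
  defines "m \<equiv> measure gauss_measure (digit_cylinder s)"
  defines "K \<equiv> 8 / transfer_contraction ^ length s"
  shows "(\<integral>x. (hit_count s N x - real N * m)^2 \<partial>gauss_measure)
         \<le> K * m * real N * (2 / (1 - transfer_contraction))"
proof -
  let ?\<theta> = transfer_contraction and ?c = "real N * m"
  have K0: "0 \<le> K" and m0: "0 \<le> m" using transfer_contraction_bounds by (auto simp: K_def m_def)
  have "(\<integral>x. (hit_count s N x)^2 \<partial>gauss_measure)
      \<le> (\<Sum>a<N. \<Sum>b<N. m^2 + K * m * ?\<theta> ^ ((a - b) + (b - a)))"
    unfolding integral_hit_count_squared m_def K_def
    by (intro sum_mono measure_digit_cylinder_inter_vimage_le[OF pos])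
  also have "\<dots> = real N * real N * m^2 + K * m * (\<Sum>a<N. \<Sum>b<N. ?\<theta> ^ ((a - b) + (b - a)))"
    by (simp add: sum.distrib sum_distrib_left)
  also have "\<dots> \<le> real N * real N * m^2 + K * m * (\<Sum>a<N. 2 / (1 - ?\<theta>))"
    using K0 m0 transfer_contraction_bounds
    by (intro add_left_mono mult_left_mono sum_mono sum_power_dist_le) auto
  finally have sq: "(\<integral>x. (hit_count s N x)^2 \<partial>gauss_measure)
      \<le> ?c^2 + K * m * real N * (2 / (1 - ?\<theta>))"
    by (simp add: power2_eq_square mult_ac)
  have "(\<lambda>x. (hit_count s N x - ?c)^2) = (\<lambda>x. ((hit_count s N x)^2 - 2 * ?c * hit_count s N x) + ?c^2)"
    by (auto simp: power2_eq_square algebra_simps)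
  then have "(\<integral>x. (hit_count s N x - ?c)^2 \<partial>gauss_measure)
      = (\<integral>x. (hit_count s N x)^2 \<partial>gauss_measure) - 2 * ?c * (\<integral>x. hit_count s N x \<partial>gauss_measure) + ?c^2"
    using integrable_hit_count_squared integrable_hit_count gauss_measure.prob_space
    by (simp add: Bochner_Integration.integral_diff Bochner_Integration.integral_add)
  also have "\<dots> = (\<integral>x. (hit_count s N x)^2 \<partial>gauss_measure) - ?c^2"
    unfolding integral_hit_count m_def by (simp add: power2_eq_square)
  finally show ?thesis using sq by simp
qed

lemma measure_hit_count_nonzero_le:
  "measure gauss_measure {x. hit_count s N x \<noteq> 0} \<le> real N * measure gauss_measure (digit_cylinder s)"
proof -
  have "{x. hit_count s N x \<noteq> 0} \<subseteq> (\<Union>n<N. (gauss ^^ n) -` digit_cylinder s)"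
  proof
    fix x assume "x \<in> {x. hit_count s N x \<noteq> 0}"
    then obtain n where "n < N" "indicator ((gauss ^^ n) -` digit_cylinder s) x \<noteq> (0::real)"
      unfolding hit_count_def by (auto elim: sum.not_neutral_contains_not_neutral)
    then show "x \<in> (\<Union>n<N. (gauss ^^ n) -` digit_cylinder s)" by (auto simp: indicator_def)
  qed
  then have "measure gauss_measure {x. hit_count s N x \<noteq> 0}
      \<le> (\<Sum>n<N. measure gauss_measure ((gauss ^^ n) -` digit_cylinder s))"
    by (intro order_trans[OF gauss_measure.finite_measure_mono gauss_measure.finite_measure_subadditive_finite])
      auto
  then show ?thesis by (simp add: measure_vimage_gauss_funpow)
qed

text \<open>If \<open>m = 0\<close> the right-hand side is \<open>0\<close> (as \<open>x / 0 = 0\<close>), and indeed almost no point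
  ever visits the cylinder.\<close>
lemma measure_hit_count_deviation_le:
  assumes pos: "\<forall>d\<in>set s. 0 < d" and \<epsilon>: "0 < \<epsilon>" and N: "1 \<le> N"
  defines "m \<equiv> measure gauss_measure (digit_cylinder s)"
  defines "K \<equiv> 8 / transfer_contraction ^ length s"
  shows "measure gauss_measure {x. \<epsilon> * m * real N < \<bar>hit_count s N x - m * real N\<bar>}
      \<le> K * (2 / (1 - transfer_contraction)) / (\<epsilon>^2 * m * real N)"
proof (cases "m = 0")
  case True
  then have "measure gauss_measure {x. \<epsilon> * m * real N < \<bar>hit_count s N x - m * real N\<bar>}
      \<le> measure gauss_measure {x. hit_count s N x \<noteq> 0}"
    by (intro gauss_measure.finite_measure_mono) auto
  also have "\<dots> \<le> 0" using measure_hit_count_nonzero_le[of s N] True by (simp add: m_def)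
  finally show ?thesis using True by simp
next
  case False
  then have m: "0 < m" unfolding m_def using measure_nonneg[of gauss_measure] by (metis order_le_less)
  define c where "c = (\<epsilon> * m * real N)^2"
  have c: "0 < c" unfolding c_def using m \<epsilon> N by simp
  have "{x. \<epsilon> * m * real N < \<bar>hit_count s N x - m * real N\<bar>}
      \<subseteq> {x \<in> space gauss_measure. c \<le> (hit_count s N x - real N * m)^2}"
    using m \<epsilon> by (auto simp: c_def mult.commute[of m] abs_le_square_iff[symmetric] less_imp_le)
  then have "measure gauss_measure {x. \<epsilon> * m * real N < \<bar>hit_count s N x - m * real N\<bar>}
      \<le> measure gauss_measure {x \<in> space gauss_measure. c \<le> (hit_count s N x - real N * m)^2}"
    by (intro gauss_measure.finite_measure_mono) auto
  also have "\<dots> \<le> (\<integral>x. (hit_count s N x - real N * m)^2 \<partial>gauss_measure) / c"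
  proof (rule integral_Markov_inequality_measure[OF _ _ _ c])
    show "integrable gauss_measure (\<lambda>x. (hit_count s N x - real N * m)^2)"
      using integrable_hit_count integrable_hit_count_squared by (simp add: power2_diff)
  qed auto
  also have "\<dots> \<le> K * m * real N * (2 / (1 - transfer_contraction)) / c"
    using variance_hit_count_le[OF pos, of N] c unfolding m_def K_def by (intro divide_right_mono) auto
  also have "\<dots> = K * (2 / (1 - transfer_contraction)) / (\<epsilon>^2 * m * real N)"
    unfolding c_def using m \<epsilon> N transfer_contraction_bounds by (simp add: power2_eq_square field_simps)
  finally show ?thesis .
qed

section \<open>Continued fraction digits of irrationals\<close>

lemma funpow_gauss_in_unit: "x \<in> {0..<1} \<Longrightarrow> (gauss ^^ n) x \<in> {0..<1}"
  by (induction n) (auto simp: gauss_def frac_lt_1)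

lemma gauss_irrational: "x \<notin> \<rat> \<Longrightarrow> gauss x \<notin> \<rat>"
proof
  assume "x \<notin> \<rat>" "gauss x \<in> \<rat>"
  then have "1 / x \<in> \<rat>"
    using Rats_add[OF \<open>gauss x \<in> \<rat>\<close> Rats_of_int[of "\<lfloor>1 / x\<rfloor>"]] by (simp add: gauss_def frac_def)
  with \<open>x \<notin> \<rat>\<close> show False using Rats_inverse[of "1 / x"] by simp
qed

lemma funpow_gauss_nonzero: "x \<notin> \<rat> \<Longrightarrow> (gauss ^^ n) x \<noteq> 0"
proof -
  assume "x \<notin> \<rat>"
  then have "(gauss ^^ n) x \<notin> \<rat>" by (induction n) (auto simp: gauss_irrational)
  then show ?thesis by auto
qed

lemma gauss_len_irrational: "x \<notin> \<rat> \<Longrightarrow> gauss_len x = None"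
  by (auto simp: gauss_len_def funpow_gauss_nonzero)

lemma cf_digit_irrational: "x \<notin> \<rat> \<Longrightarrow> cf_digit x i = digit ((gauss ^^ (i - 1)) x)"
  by (simp add: cf_digit_def gauss_len_irrational gauss_digit_def digit_def)

lemma cf_has_digits_irrational: "x \<notin> \<rat> \<Longrightarrow> cf_has_digits x m"
  by (simp add: cf_has_digits_def gauss_len_irrational)

lemma mem_cylinder_iff_irrational:
  "x \<notin> \<rat> \<Longrightarrow> x \<in> {0..<1} \<Longrightarrow> x \<in> cylinder s \<longleftrightarrow> x \<in> digit_cylinder s"
  by (simp add: cylinder_def digit_cylinder_def cf_digit_irrational cf_has_digits_irrational)

lemma A_count_irrational:
  assumes x: "x \<notin> \<rat>"
  shows "real (A_count s N x) = hit_count s N x"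
proof -
  have "(gauss ^^ (n + j)) x = (gauss ^^ j) ((gauss ^^ n) x)" for n j
    by (simp add: funpow_add add.commute[of n])
  then have hit: "(\<forall>j<length s. cf_digit x (Suc n + j) = s ! j) \<longleftrightarrow> (gauss ^^ n) x \<in> digit_cylinder s" for n
    by (simp add: digit_cylinder_def cf_digit_irrational[OF x])
  have "{i \<in> {1..N}. \<forall>j<length s. cf_digit x (i + j) = s ! j}
      = Suc ` {n \<in> {..<N}. (gauss ^^ n) x \<in> digit_cylinder s}"
  proof (intro set_eqI)
    fix i
    show "i \<in> {i \<in> {1..N}. \<forall>j<length s. cf_digit x (i + j) = s ! j}
        \<longleftrightarrow> i \<in> Suc ` {n \<in> {..<N}. (gauss ^^ n) x \<in> digit_cylinder s}"
      using hit[of "i - 1"] by (cases i) auto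
  qed
  then have "real (A_count s N x) = real (card {n \<in> {..<N}. (gauss ^^ n) x \<in> digit_cylinder s})"
    unfolding A_count_def by (simp add: card_image)
  also have "\<dots> = hit_count s N x"
    unfolding hit_count_def indicator_def
    by (simp add: sum_of_bool_eq[symmetric] of_bool_def Collect_conj_eq Int_commute lessThan_def)
  finally show ?thesis .
qed

lemma sets_borel_countable: "countable (A :: real set) \<Longrightarrow> A \<in> sets borel"
  by (rule sets.countable) auto

lemma sets_cylinder[measurable]: "cylinder s \<in> sets borel"
proof -
  have "cylinder s = (digit_cylinder s \<inter> {0..<1} \<inter> (UNIV - \<rat>)) \<union> (cylinder s \<inter> \<rat>)"
  proof (intro set_eqI)
    fix x
    show "x \<in> cylinder s \<longleftrightarrow> x \<in> (digit_cylinder s \<inter> {0..<1} \<inter> (UNIV - \<rat>)) \<union> (cylinder s \<inter> \<rat>)"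
      using mem_cylinder_iff_irrational[of x s] by (cases "x \<in> \<rat>") (auto simp: cylinder_def)
  qed
  moreover have Q: "\<rat> \<in> sets (borel :: real measure)" "cylinder s \<inter> \<rat> \<in> sets borel"
    by (auto intro!: sets_borel_countable countable_rat intro: countable_subset[OF _ countable_rat])
  moreover have "digit_cylinder s \<inter> {0..<1} \<inter> (UNIV - \<rat>) \<in> sets borel"
    using Q by (intro sets.Int sets.Diff) auto
  ultimately show ?thesis by (metis sets.Un)
qed

lemma AE_gauss_measure_irrational: "AE x in gauss_measure. x \<notin> \<rat>"
proof -
  have "AE x in lborel. x \<notin> \<rat>"
    using countable_imp_null_set_lborel[OF countable_rat] by (rule AE_not_in)
  then show ?thesis unfolding gauss_measure_eq_density by (subst AE_density) (auto elim: AE_mp)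
qed

lemma measure_cylinder: "gmu (cylinder s) = measure gauss_measure (digit_cylinder s)"
proof (rule measure_eq_AE)
  show "AE x in gauss_measure. x \<in> cylinder s \<longleftrightarrow> x \<in> digit_cylinder s"
    using AE_gauss_measure_irrational AE_gauss_measure_in_unit
    by eventually_elim (simp add: mem_cylinder_iff_irrational)
qed auto

section \<open>The exceptional set\<close>

lemma gauss_len_SomeD:
  assumes "gauss_len x = Some n"
  shows "(gauss ^^ n) x = 0" "m < n \<Longrightarrow> (gauss ^^ m) x \<noteq> 0"
proof -
  have ex: "\<exists>n. (gauss ^^ n) x = 0" and n: "n = (LEAST n. (gauss ^^ n) x = 0)"
    using assms by (auto simp: gauss_len_def split: if_splits)
  show "(gauss ^^ n) x = 0" using LeastI_ex[OF ex] n by simp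
  show "m < n \<Longrightarrow> (gauss ^^ m) x \<noteq> 0" using not_less_Least[of m "\<lambda>n. (gauss ^^ n) x = 0"] n by simp
qed

lemma one_le_floor_inverse: "y \<in> {0..<1} \<Longrightarrow> y \<noteq> 0 \<Longrightarrow> 1 \<le> \<lfloor>1 / y\<rfloor>"
  by (simp add: le_floor_iff field_simps)

text \<open>The last digit of a finite Gauss expansion is at least \<open>2\<close>; this is why the longer
  expansion, which lowers it by one, still has positive digits.\<close>
lemma two_le_floor_inverse:
  assumes "y \<in> {0..<1}" "y \<noteq> 0" "gauss y = 0"
  shows "2 \<le> \<lfloor>1 / y\<rfloor>"
proof -
  have "1 < 1 / y" using assms(1,2) by (simp add: field_simps)
  moreover have "1 / y \<in> \<int>" using assms(3) by (simp add: gauss_def frac_eq_0_iff)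
  ultimately show ?thesis by (auto elim!: Ints_cases)
qed

lemma cf_digit_pos:
  assumes x: "x \<in> {0..<1}" and "cf_has_digits x M" and i: "1 \<le> i" "i \<le> M"
  shows "0 < cf_digit x i"
proof (cases "gauss_len x")
  case None
  then show ?thesis
    using one_le_floor_inverse[OF funpow_gauss_in_unit[OF x, of "i - 1"]]
    by (simp add: cf_digit_def gauss_digit_def gauss_len_def split: if_splits)
next
  case (Some n)
  have "M \<le> (if n = 0 then 0 else n + 1)" using assms(2) by (simp add: cf_has_digits_def Some)
  then have "n \<noteq> 0" "i \<le> n + 1" using i by (auto split: if_splits)
  then consider "i < n" | "i = n" | "i = n + 1" by linarith
  then show ?thesis
  proof cases
    case 1
    then have "(gauss ^^ (i - 1)) x \<noteq> 0" using gauss_len_SomeD(2)[OF Some] by simp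
    then show ?thesis using 1 one_le_floor_inverse[OF funpow_gauss_in_unit[OF x]]
      by (simp add: cf_digit_def Some gauss_digit_def)
  next
    case 2
    then obtain k where k: "n = Suc k" using \<open>n \<noteq> 0\<close> not0_implies_Suc by blast
    have "(gauss ^^ k) x \<noteq> 0" using gauss_len_SomeD(2)[OF Some, of k] k by simp
    moreover have "gauss ((gauss ^^ k) x) = 0" using gauss_len_SomeD(1)[OF Some] k by simp
    ultimately have "2 \<le> \<lfloor>1 / (gauss ^^ k) x\<rfloor>"
      by (rule two_le_floor_inverse[OF funpow_gauss_in_unit[OF x]])
    then show ?thesis using 2 k by (simp add: cf_digit_def Some gauss_digit_def)
  next
    case 3
    then show ?thesis using \<open>n \<noteq> 0\<close> by (simp add: cf_digit_def Some)
  qed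
qed

lemma measure_E_set_le:
  assumes pos: "\<forall>d\<in>set s. 0 < d" and \<epsilon>: "0 < \<epsilon>" and N: "1 \<le> N"
  shows "gmu (E_set \<epsilon> s N)
    \<le> 8 / transfer_contraction ^ length s * (2 / (1 - transfer_contraction)) / (\<epsilon>^2 * gmu (cylinder s) * real N)"
proof -
  define m where "m = gmu (cylinder s)"
  have m: "m = measure gauss_measure (digit_cylinder s)" unfolding m_def by (rule measure_cylinder)
  have "gmu (E_set \<epsilon> s N) \<le> gmu {x. \<epsilon> * m * real N < \<bar>hit_count s N x - m * real N\<bar>}"
    by (rule gauss_measure.finite_measure_mono_AE) (use AE_gauss_measure_irrational in
        \<open>eventually_elim, auto simp: E_set_def m_def A_count_irrational\<close>)
  also have "\<dots> \<le> 8 / transfer_contraction ^ length s * (2 / (1 - transfer_contraction)) / (\<epsilon>^2 * m * real N)"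
    unfolding m by (rule measure_hit_count_deviation_le[OF pos \<epsilon> N])
  finally show ?thesis by (simp add: m_def)
qed

lemma A_count_eq_if_same_digits:
  assumes "1 \<le> length s" and "\<And>i. i < N + length s - 1 \<Longrightarrow> cf_digit y (i + 1) = cf_digit x (i + 1)"
  shows "A_count s N y = A_count s N x"
proof -
  have "cf_digit y (i + j) = cf_digit x (i + j)" if "i \<in> {1..N}" "j < length s" for i j
  proof -
    have "i + j - 1 < N + length s - 1" "i + j - 1 + 1 = i + j" using that by auto
    then show ?thesis using assms(2)[of "i + j - 1"] by simp
  qed
  then have "(\<forall>j<length s. cf_digit y (i + j) = s ! j) \<longleftrightarrow> (\<forall>j<length s. cf_digit x (i + j) = s ! j)"
    if "i \<in> {1..N}" for i
    using that by simp
  then have "{i \<in> {1..N}. \<forall>j<length s. cf_digit y (i + j) = s ! j}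
      = {i \<in> {1..N}. \<forall>j<length s. cf_digit x (i + j) = s ! j}"
    by blast
  then show ?thesis by (simp add: A_count_def)
qed

lemma E_set_eq_union_cylinders:
  assumes "1 \<le> length s"
  shows "\<exists>T. T \<subseteq> {t. length t = N + length s - 1 \<and> (\<forall>d \<in> set t. d > 0)}
           \<and> E_set \<epsilon> s N = (\<Union>t\<in>T. cylinder t)"
proof -
  let ?M = "N + length s - 1"
  define digits where "digits x = map (\<lambda>i. cf_digit x (i + 1)) [0..<?M]" for x
  have E: "x \<in> {0..<1}" "cf_has_digits x ?M" if "x \<in> E_set \<epsilon> s N" for x
    using that by (auto simp: E_set_def)
  have "digits ` E_set \<epsilon> s N \<subseteq> {t. length t = ?M \<and> (\<forall>d \<in> set t. d > 0)}"
  proof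
    fix t assume "t \<in> digits ` E_set \<epsilon> s N"
    then obtain x where x: "x \<in> E_set \<epsilon> s N" and t: "t = digits x" by blast
    show "t \<in> {t. length t = ?M \<and> (\<forall>d \<in> set t. d > 0)}"
      using cf_digit_pos[OF E[OF x]] by (auto simp: t digits_def)
  qed
  moreover have "E_set \<epsilon> s N = (\<Union>t\<in>digits ` E_set \<epsilon> s N. cylinder t)"
  proof
    show "E_set \<epsilon> s N \<subseteq> (\<Union>t\<in>digits ` E_set \<epsilon> s N. cylinder t)"
    proof
      fix x assume x: "x \<in> E_set \<epsilon> s N"
      then have "x \<in> cylinder (digits x)" using E[OF x] by (simp add: cylinder_def digits_def)
      then show "x \<in> (\<Union>t\<in>digits ` E_set \<epsilon> s N. cylinder t)" using x by blast
    qed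
    show "(\<Union>t\<in>digits ` E_set \<epsilon> s N. cylinder t) \<subseteq> E_set \<epsilon> s N"
    proof
      fix y assume "y \<in> (\<Union>t\<in>digits ` E_set \<epsilon> s N. cylinder t)"
      then obtain x where x: "x \<in> E_set \<epsilon> s N" and "y \<in> cylinder (digits x)" by blast
      then have y: "y \<in> {0..<1}" "cf_has_digits y ?M"
        and same: "\<And>i. i < ?M \<Longrightarrow> cf_digit y (i + 1) = cf_digit x (i + 1)"
        by (auto simp: cylinder_def digits_def)
      have "A_count s N y = A_count s N x" by (rule A_count_eq_if_same_digits[OF assms same])
      then show "y \<in> E_set \<epsilon> s N" using x y by (simp add: E_set_def)
    qed
  qed
  ultimately show ?thesis by blast
qed

theorem proposition2p3:
  fixes k :: nat
  assumes "k \<ge> 1"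
  shows "\<exists>C::real. \<forall>(s::nat list) (\<epsilon>::real) (N::nat).
           length s = k \<longrightarrow> (\<forall>d \<in> set s. d > 0) \<longrightarrow> \<epsilon> > 0 \<longrightarrow> N \<ge> 1 \<longrightarrow>
             gmu (E_set \<epsilon> s N) \<le> C / (\<epsilon>^2 * gmu (cylinder s) * N)
           \<and> (\<exists>T. T \<subseteq> {t. length t = N + k - 1 \<and> (\<forall>d \<in> set t. d > 0)}
                  \<and> E_set \<epsilon> s N = (\<Union>t\<in>T. cylinder t))"
proof (rule exI[of _ "8 / transfer_contraction ^ k * (2 / (1 - transfer_contraction))"], intro allI impI conjI)
  fix s :: "nat list" and \<epsilon> :: real and N :: nat
  assume k: "length s = k" and "\<forall>d \<in> set s. d > 0" "\<epsilon> > 0" "N \<ge> 1"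
  then show "gmu (E_set \<epsilon> s N)
      \<le> 8 / transfer_contraction ^ k * (2 / (1 - transfer_contraction)) / (\<epsilon>^2 * gmu (cylinder s) * N)"
    using measure_E_set_le[of s \<epsilon> N] by simp
  show "\<exists>T. T \<subseteq> {t. length t = N + k - 1 \<and> (\<forall>d \<in> set t. d > 0)} \<and> E_set \<epsilon> s N = (\<Union>t\<in>T. cylinder t)"
    using E_set_eq_union_cylinders[of s N \<epsilon>] k assms by simp
qed

end
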